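(* Consider a finite Markov decision process with state space $\mathcal{S}$, action space $\mathcal{A}$ ($|\mathcal{S}\times\mathcal{A}|<\infty$), random rewards $r(s,a)$ with $\operatorname{Var}[r(s,a)]<\infty$ for all $s,a$, and discount factor $\gamma\in[0,1)$; let $Q^*$ be its optimal action-value function. Fix $K\in\{1,\dots,|\mathcal{A}|\}$. Two Q-functions $Q^A,Q^B$ are stored in lookup tables and updated simultaneously (action candidate based clipped Double Q-learning with simultaneous updating): at each step $t$, given experience $\langle s_t,a_t,r_t,s_{t+1}\rangle$, let $\mathcal{M}_K$ be the set of actions whose values are among the top $K$ values of $Q^B_t(s_{t+1},\cdot)$, $a_K^*=\arg\max_{a\in\mathcal{M}_K}Q^A_t(s_{t+1},a)$, $a^*=\arg\max_aQ^A_t(s_{t+1},a)$, set $$y_t=r_t+\gamma\min\{Q^B_t(s_{t+1},a_K^* ),Q^A_t(s_{t+1},a^* )\},$$ and update $Q^A_{t+1}(s_t,a_t)=Q^A_t(s_t,a_t)+\alpha_t(s_t,a_t)(y_t-Q^A_t(s_t,a_t))$ and $Q^B_{t+1}(s_t,a_t)=Q^B_t(s_t,a_t)+\alpha_t(s_t,a_t)(y_t-Q^B_t(s_t,a_t))$. Assume: (1) each state-action pair is sampled an infinite number of times; (2) both $Q^A$ and $Q^B$ receive an infinite number of updates; (3) the learning rates satisfy $\alpha_t(s,a)\in[0,1]$, $\sum_t\alpha_t(s,a)=\infty$, $\sum_t\alpha_t(s,a)^2<\infty$ with probability 1, and $\alpha_t(s,a)=0$ for all $(s,a)\neq(s_t,a_t)$.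 Then this algorithm converges to the optimal value function $Q^*$ with probability 1.
   Context: The optimal action-value function $Q^*$ satisfies the Bellman optimality equation $Q^*(s,a)=R(s,a)+\gamma\sum_{s'}\mathcal{P}_{sa}^{s'}\max_{a'}Q^*(s',a')$, where $R$ is the expected reward and $\mathcal{P}$ the transition probability. *)

theory Defs
  imports "HOL-Probability.Probability"
begin

text \<open>A finite MDP is given by a reward/transition kernel: for each state-action
pair (s,a), Kr s a is the joint law of (reward, next state).\<close>

definition exp_reward :: "('s \<Rightarrow> 'a \<Rightarrow> (real \<times> 's) measure) \<Rightarrow> 's \<Rightarrow> 'a \<Rightarrow> real" where
  "exp_reward Kr s a = (\<integral>x. fst x \<partial>(Kr s a))"

definition trans_prob :: "('s \<Rightarrow> 'a \<Rightarrow> (real \<times> 's) measure) \<Rightarrow> 's \<Rightarrow> 'a \<Rightarrow> 's \<Rightarrow> real" where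
  "trans_prob Kr s a s' = measure (Kr s a) (UNIV \<times> {s'})"

definition is_optimal_Q ::
  "('s::finite \<Rightarrow> 'a::finite \<Rightarrow> (real \<times> 's) measure) \<Rightarrow> real \<Rightarrow> ('s \<Rightarrow> 'a \<Rightarrow> real) \<Rightarrow> bool" where
  "is_optimal_Q Kr \<gamma> Q \<longleftrightarrow>
     (\<forall>s a. Q s a = exp_reward Kr s a + \<gamma> * (\<Sum>s'\<in>UNIV. trans_prob Kr s a s' * Max (range (Q s'))))"

definition topK :: "nat \<Rightarrow> ('a::finite \<Rightarrow> real) \<Rightarrow> 'a set" where
  "topK K f = {a. card {b. f a < f b} < K}"

text \<open>S t = s_t, A t = a_t, Rw t = r_t, S (Suc t) = s_{t+1}, \<alpha> t s a = learning rate,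
  aK t = the selected action a_K^* at step t (tie-breaking left to the process aK).\<close>
primrec acdq_tables ::
  "real \<Rightarrow> ('s \<Rightarrow> 'a::finite \<Rightarrow> real) \<Rightarrow> ('s \<Rightarrow> 'a \<Rightarrow> real) \<Rightarrow> (nat \<Rightarrow> 'w \<Rightarrow> 's)
   \<Rightarrow> (nat \<Rightarrow> 'w \<Rightarrow> real) \<Rightarrow> (nat \<Rightarrow> 's \<Rightarrow> 'a \<Rightarrow> 'w \<Rightarrow> real) \<Rightarrow> (nat \<Rightarrow> 'w \<Rightarrow> 'a)
   \<Rightarrow> nat \<Rightarrow> 'w \<Rightarrow> ('s \<Rightarrow> 'a \<Rightarrow> real) \<times> ('s \<Rightarrow> 'a \<Rightarrow> real)" where
  "acdq_tables \<gamma> QA0 QB0 S Rw \<alpha> aK 0 \<omega> = (QA0, QB0)"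
| "acdq_tables \<gamma> QA0 QB0 S Rw \<alpha> aK (Suc t) \<omega> =
    (let QA = fst (acdq_tables \<gamma> QA0 QB0 S Rw \<alpha> aK t \<omega>);
         QB = snd (acdq_tables \<gamma> QA0 QB0 S Rw \<alpha> aK t \<omega>);
         s' = S (Suc t) \<omega>;
         y = Rw t \<omega> + \<gamma> * min (QB s' (aK t \<omega>)) (Max (range (QA s')))
     in (\<lambda>s a. QA s a + \<alpha> t s a \<omega> * (y - QA s a),
         \<lambda>s a. QB s a + \<alpha> t s a \<omega> * (y - QB s a)))"

end

theory Submission
  imports Defs
begin

text \<open>
  Both tables follow the same averaging recursion, so their difference tends to 0. As the selected
  action lies among the top-\<open>K\<close> actions of \<open>QB\<close>, the clipped target then differs from the
  ordinary Q-learning target \<open>r + \<gamma> * Max (range (QA s'))\<close> by a vanishing bias. Along a sample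
  path, \<open>QA - Q*\<close> is the sum of running averages of noise, which vanish, and of a remainder
  that contracts by the factor \<open>\<gamma>\<close> of the Bellman operator in the sup norm; this gives convergence
  as in the classical stochastic-approximation argument. The noise consists of martingale
  differences (reward noise, and next-state noise evaluated on values clipped at a level \<open>N\<close>).
  With square-summable learning rates their weighted sums converge almost surely by Kolmogorov's
  maximal inequality, and a Kronecker-type lemma turns this into vanishing running averages. The
  tables are bounded along every path, so for large \<open>N\<close> the clipping is inactive.
\<close>

section \<open>Averaging recursions\<close>

lemma prod_one_minus_tendsto_zero:
  fixes \<beta> :: "nat \<Rightarrow> real"
  assumes \<beta>0: "\<And>k. 0 \<le> \<beta> k" and \<beta>1: "\<And>k. \<beta> k \<le> 1" and not_summable: "\<not> summable \<beta>"
  shows "(\<lambda>n. \<Prod>k<n. 1 - \<beta> k) \<longlonglongrightarrow> 0"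
proof (rule tendsto_sandwich[where f = "\<lambda>_. 0"])
  have "filterlim (\<lambda>n. \<Sum>k<n. \<beta> k) at_top sequentially"
    unfolding filterlim_at_top eventually_sequentially
  proof
    fix Z :: real
    obtain n where n: "Z < (\<Sum>k<n. \<beta> k)"
      using not_summable summableI_nonneg_bounded[of \<beta> Z] \<beta>0 by (meson not_le)
    have "(\<Sum>k<n. \<beta> k) \<le> (\<Sum>k<m. \<beta> k)" if "n \<le> m" for m
      using that \<beta>0 by (intro sum_mono2) auto
    with n show "\<exists>N. \<forall>m\<ge>N. Z \<le> (\<Sum>k<m. \<beta> k)" by force
  qed
  then have "filterlim (\<lambda>n. - (\<Sum>k<n. \<beta> k)) at_bot sequentially"
    by (simp add: filterlim_uminus_at_top)
  then show "(\<lambda>n. exp (- (\<Sum>k<n. \<beta> k))) \<longlonglongrightarrow> 0"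
    by (rule filterlim_compose[OF exp_at_bot])
  have "(\<Prod>k<n. 1 - \<beta> k) \<le> (\<Prod>k<n. exp (- \<beta> k))" for n
  proof (intro prod_mono conjI)
    fix k
    show "0 \<le> 1 - \<beta> k" using \<beta>1[of k] by simp
    show "1 - \<beta> k \<le> exp (- \<beta> k)" using exp_ge_add_one_self[of "- \<beta> k"] by simp
  qed
  then show "\<forall>\<^sub>F n in sequentially. (\<Prod>k<n. 1 - \<beta> k) \<le> exp (- (\<Sum>k<n. \<beta> k))"
    by (simp add: exp_sum sum_negf[symmetric])
  show "\<forall>\<^sub>F n in sequentially. 0 \<le> (\<Prod>k<n. 1 - \<beta> k)"
    using \<beta>1 by (simp add: prod_nonneg)
qed simp

lemma averaging_eventually_le:
  fixes \<beta> x :: "nat \<Rightarrow> real"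
  assumes \<beta>0: "\<And>t. 0 \<le> \<beta> t" and \<beta>1: "\<And>t. \<beta> t \<le> 1" and not_summable: "\<not> summable \<beta>"
    and step: "\<And>t. T \<le> t \<Longrightarrow> x (Suc t) \<le> (1 - \<beta> t) * x t + \<beta> t * c"
    and "0 < \<delta>"
  shows "\<forall>\<^sub>F t in sequentially. x t \<le> c + \<delta>"
proof -
  define y where "y t = max (x t - c) 0" for t
  have y_step: "y (Suc t) \<le> (1 - \<beta> t) * y t" if "T \<le> t" for t
  proof -
    have "x (Suc t) - c \<le> (1 - \<beta> t) * (x t - c)"
      using step[OF that] by (simp add: algebra_simps)
    also have "\<dots> \<le> (1 - \<beta> t) * y t"
      using \<beta>1[of t] by (intro mult_left_mono) (auto simp: y_def)
    finally show ?thesis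
      using \<beta>1[of t] by (auto simp: y_def)
  qed
  have y_le: "y (T + n) \<le> y T * (\<Prod>k<n. 1 - \<beta> (T + k))" for n
  proof (induction n)
    case (Suc n)
    have "y (T + Suc n) \<le> (1 - \<beta> (T + n)) * y (T + n)"
      using y_step[of "T + n"] by simp
    also have "\<dots> \<le> (1 - \<beta> (T + n)) * (y T * (\<Prod>k<n. 1 - \<beta> (T + k)))"
      using Suc \<beta>1[of "T + n"] by (intro mult_left_mono) auto
    finally show ?case
      by (simp add: algebra_simps)
  qed simp
  have "\<not> summable (\<lambda>k. \<beta> (T + k))"
    using not_summable summable_iff_shift[of \<beta> T] by (simp add: add.commute)
  then have "(\<lambda>n. y T * (\<Prod>k<n. 1 - \<beta> (T + k))) \<longlonglongrightarrow> y T * 0"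
    using \<beta>0 \<beta>1 by (intro tendsto_mult tendsto_const prod_one_minus_tendsto_zero)
  from order_tendstoD(2)[OF this] obtain N where N: "\<And>n. N \<le> n \<Longrightarrow> y T * (\<Prod>k<n. 1 - \<beta> (T + k)) < \<delta>"
    using \<open>0 < \<delta>\<close> by (auto simp: eventually_sequentially)
  have "x t \<le> c + \<delta>" if "T + N \<le> t" for t
  proof -
    have "y t \<le> y T * (\<Prod>k<t - T. 1 - \<beta> (T + k))"
      using y_le[of "t - T"] that by simp
    also have "\<dots> < \<delta>"
      using N[of "t - T"] that by simp
    finally show ?thesis
      by (simp add: y_def)
  qed
  then show ?thesis
    by (auto simp: eventually_sequentially)
qed

lemma averaging_tendsto_zero:
  fixes \<beta> x w :: "nat \<Rightarrow> real"
  assumes \<beta>0: "\<And>t. 0 \<le> \<beta> t" and \<beta>1: "\<And>t. \<beta> t \<le> 1" and not_summable: "\<not> summable \<beta>"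
    and step: "\<And>t. x (Suc t) = (1 - \<beta> t) * x t + \<beta> t * w t"
    and w: "w \<longlonglongrightarrow> 0"
  shows "x \<longlonglongrightarrow> 0"
proof (rule tendstoI)
  fix \<epsilon> :: real
  assume "0 < \<epsilon>"
  then have "\<forall>\<^sub>F t in sequentially. \<bar>w t\<bar> < \<epsilon> / 2"
    by (intro order_tendstoD(2)[OF tendsto_rabs_zero[OF w]]) simp
  then obtain T where T: "\<And>t. T \<le> t \<Longrightarrow> \<bar>w t\<bar> < \<epsilon> / 2"
    by (auto simp: eventually_sequentially)
  have "\<bar>x (Suc t)\<bar> \<le> (1 - \<beta> t) * \<bar>x t\<bar> + \<beta> t * (\<epsilon> / 2)" if "T \<le> t" for t
  proof -
    have "\<bar>x (Suc t)\<bar> \<le> (1 - \<beta> t) * \<bar>x t\<bar> + \<beta> t * \<bar>w t\<bar>"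
      using step[of t] \<beta>0[of t] \<beta>1[of t] abs_triangle_ineq[of "(1 - \<beta> t) * x t" "\<beta> t * w t"]
      by (simp add: abs_mult)
    also have "\<dots> \<le> (1 - \<beta> t) * \<bar>x t\<bar> + \<beta> t * (\<epsilon> / 2)"
      using T[OF that] \<beta>0[of t] by (intro add_left_mono mult_left_mono) auto
    finally show ?thesis .
  qed
  from averaging_eventually_le[of \<beta> T "\<lambda>t. \<bar>x t\<bar>" "\<epsilon> / 2" "\<epsilon> / 4", OF \<beta>0 \<beta>1 not_summable this]
  show "\<forall>\<^sub>F t in sequentially. dist (x t) 0 < \<epsilon>"
    using \<open>0 < \<epsilon>\<close> by (auto elim: eventually_mono)
qed

primrec running_avg :: "(nat \<Rightarrow> real) \<Rightarrow> (nat \<Rightarrow> real) \<Rightarrow> nat \<Rightarrow> real" where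
  "running_avg \<beta> w 0 = 0"
| "running_avg \<beta> w (Suc t) = (1 - \<beta> t) * running_avg \<beta> w t + \<beta> t * w t"

lemma running_avg_add:
  "running_avg \<beta> (\<lambda>t. u t + w t) = (\<lambda>t. running_avg \<beta> u t + running_avg \<beta> w t)"
proof
  show "running_avg \<beta> (\<lambda>t. u t + w t) t = running_avg \<beta> u t + running_avg \<beta> w t" for t
    by (induction t) (simp_all add: algebra_simps)
qed

lemma running_avg_tendsto_zero:
  assumes "\<And>t. 0 \<le> \<beta> t" "\<And>t. \<beta> t \<le> 1" "\<not> summable \<beta>" "w \<longlonglongrightarrow> 0"
  shows "running_avg \<beta> w \<longlonglongrightarrow> 0"
  using averaging_tendsto_zero[OF assms(1-3) running_avg.simps(2) assms(4)] .

text \<open>A Kronecker-type lemma: the tails \<open>\<Sum>k\<ge>t. \<beta> k * w k\<close> tend to 0, and the running average plus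
  the tail is itself an average of the tails.\<close>

lemma running_avg_tendsto_zero_of_summable:
  assumes \<beta>0: "\<And>t. 0 \<le> \<beta> t" and \<beta>1: "\<And>t. \<beta> t \<le> 1" and not_summable: "\<not> summable \<beta>"
    and sum: "summable (\<lambda>t. \<beta> t * w t)"
  shows "running_avg \<beta> w \<longlonglongrightarrow> 0"
proof -
  define tail where "tail t = (\<Sum>k. \<beta> (k + t) * w (k + t))" for t
  have tail0: "tail \<longlonglongrightarrow> 0"
    unfolding tail_def using suminf_exist_split2[OF sum] by simp
  have tail_Suc: "tail t = \<beta> t * w t + tail (Suc t)" for t
  proof -
    have "summable (\<lambda>k. \<beta> (k + t) * w (k + t))"
      using summable_iff_shift[of "\<lambda>t. \<beta> t * w t" t] sum by simp
    from suminf_split_head[OF this] show ?thesis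
      by (simp add: tail_def)
  qed
  have "running_avg \<beta> w (Suc t) + tail (Suc t) = (1 - \<beta> t) * (running_avg \<beta> w t + tail t) + \<beta> t * tail t"
    for t using tail_Suc[of t] by (simp add: algebra_simps)
  then have "(\<lambda>t. running_avg \<beta> w t + tail t) \<longlonglongrightarrow> 0"
    by (rule averaging_tendsto_zero[OF \<beta>0 \<beta>1 not_summable _ tail0])
  from tendsto_diff[OF this tail0] show ?thesis
    by simp
qed

text \<open>The error \<open>\<Delta>\<close> differs from vanishing noise \<open>W\<close> by an average of terms bounded by \<open>\<gamma>\<close>
  times the sup norm of \<open>\<Delta>\<close>, so each round shrinks an eventual bound on \<open>\<Delta>\<close> by \<open>(1 + \<gamma>) / 2\<close>.\<close>

context
  fixes \<Delta> W G \<beta> :: "nat \<Rightarrow> 'i::finite \<Rightarrow> real" and \<gamma> :: real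
  assumes \<gamma>0: "0 \<le> \<gamma>" and \<gamma>1: "\<gamma> < 1"
    and \<beta>0: "\<And>t i. 0 \<le> \<beta> t i" and \<beta>1: "\<And>t i. \<beta> t i \<le> 1"
    and not_summable: "\<And>i. \<not> summable (\<lambda>t. \<beta> t i)"
    and step: "\<And>t i. \<Delta> (Suc t) i - W (Suc t) i = (1 - \<beta> t i) * (\<Delta> t i - W t i) + \<beta> t i * G t i"
    and G_le: "\<And>t i D. (\<And>j. \<bar>\<Delta> t j\<bar> \<le> D) \<Longrightarrow> \<bar>G t i\<bar> \<le> \<gamma> * D"
    and W: "\<And>i. (\<lambda>t. W t i) \<longlonglongrightarrow> 0"
begin

lemma noisy_contraction_step:
  assumes "0 < D" and "\<forall>\<^sub>F t in sequentially. \<forall>j. \<bar>\<Delta> t j\<bar> \<le> D"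
  shows "\<forall>\<^sub>F t in sequentially. \<forall>j. \<bar>\<Delta> t j\<bar> \<le> (1 + \<gamma>) / 2 * D"
proof -
  obtain T where T: "\<And>t j. T \<le> t \<Longrightarrow> \<bar>\<Delta> t j\<bar> \<le> D"
    using assms(2) by (auto simp: eventually_sequentially)
  have margin: "0 < (1 - \<gamma>) * D / 4"
    using \<gamma>1 \<open>0 < D\<close> by simp
  have "\<forall>\<^sub>F t in sequentially. \<bar>\<Delta> t i\<bar> \<le> (1 + \<gamma>) / 2 * D" for i
  proof -
    have "\<bar>\<Delta> (Suc t) i - W (Suc t) i\<bar> \<le> (1 - \<beta> t i) * \<bar>\<Delta> t i - W t i\<bar> + \<beta> t i * (\<gamma> * D)"
      if "T \<le> t" for t
    proof -
      have "\<bar>\<Delta> (Suc t) i - W (Suc t) i\<bar> \<le> (1 - \<beta> t i) * \<bar>\<Delta> t i - W t i\<bar> + \<beta> t i * \<bar>G t i\<bar>"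
        using step[of t i] \<beta>0[of t i] \<beta>1[of t i]
          abs_triangle_ineq[of "(1 - \<beta> t i) * (\<Delta> t i - W t i)" "\<beta> t i * G t i"]
        by (simp add: abs_mult)
      also have "\<dots> \<le> (1 - \<beta> t i) * \<bar>\<Delta> t i - W t i\<bar> + \<beta> t i * (\<gamma> * D)"
        using G_le[OF T[OF that]] \<beta>0[of t i] by (intro add_left_mono mult_left_mono) auto
      finally show ?thesis .
    qed
    then have "\<forall>\<^sub>F t in sequentially. \<bar>\<Delta> t i - W t i\<bar> \<le> \<gamma> * D + (1 - \<gamma>) * D / 4"
      using \<beta>0 \<beta>1 not_summable margin by (intro averaging_eventually_le[where \<beta> = "\<lambda>t. \<beta> t i" and T = T]) auto
    moreover have "\<forall>\<^sub>F t in sequentially. \<bar>W t i\<bar> < (1 - \<gamma>) * D / 4"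
      using order_tendstoD(2)[OF tendsto_rabs_zero[OF W] margin] .
    ultimately show ?thesis
    proof eventually_elim
      case (elim t)
      have "\<gamma> * D + (1 - \<gamma>) * D / 4 + (1 - \<gamma>) * D / 4 = (1 + \<gamma>) / 2 * D"
        by (simp add: field_simps)
      with elim show ?case
        using abs_triangle_ineq[of "\<Delta> t i - W t i" "W t i"] by linarith
    qed
  qed
  then show ?thesis
    by (rule eventually_all_finite)
qed

lemma noisy_contraction_tendsto_zero:
  assumes bounded: "\<And>t i. \<bar>\<Delta> t i\<bar> \<le> B"
  shows "(\<lambda>t. \<Delta> t i) \<longlonglongrightarrow> 0"
proof (rule tendstoI)
  fix \<epsilon> :: real
  assume "0 < \<epsilon>"
  define \<rho> where "\<rho> = (1 + \<gamma>) / 2"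
  have \<rho>: "0 < \<rho>" "\<rho> < 1"
    using \<gamma>0 \<gamma>1 by (auto simp: \<rho>_def)
  define B' where "B' = max B 1"
  have contraction: "\<forall>\<^sub>F t in sequentially. \<forall>j. \<bar>\<Delta> t j\<bar> \<le> \<rho> ^ m * B'" for m
  proof (induction m)
    case 0
    have "\<bar>\<Delta> t j\<bar> \<le> B'" for t j
      using bounded[of t j] by (simp add: B'_def)
    then show ?case
      by simp
  next
    case (Suc m)
    have "0 < \<rho> ^ m * B'"
      using \<rho> by (simp add: B'_def)
    from noisy_contraction_step[OF this Suc] show ?case
      by (simp add: \<rho>_def mult.assoc)
  qed
  have "(\<lambda>m. \<rho> ^ m * B') \<longlonglongrightarrow> 0 * B'"
    using \<rho> by (intro tendsto_mult tendsto_const LIMSEQ_power_zero) auto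
  from order_tendstoD(2)[OF this] obtain m where m: "\<rho> ^ m * B' < \<epsilon>"
    using \<open>0 < \<epsilon>\<close> by (auto simp: eventually_sequentially)
  from contraction[of m] show "\<forall>\<^sub>F t in sequentially. dist (\<Delta> t i) 0 < \<epsilon>"
  proof eventually_elim
    case (elim t)
    then have "\<bar>\<Delta> t i\<bar> \<le> \<rho> ^ m * B'" by blast
    with m show ?case by simp
  qed
qed

end

section \<open>Clipped double Q-learning along a sample path\<close>

lemma abs_le_sum_abs_table:
  fixes f :: "'s::finite \<Rightarrow> 'a::finite \<Rightarrow> real"
  shows "\<bar>f s a\<bar> \<le> (\<Sum>s'\<in>UNIV. \<Sum>a'\<in>UNIV. \<bar>f s' a'\<bar>)"
proof -
  have "\<bar>f s a\<bar> \<le> (\<Sum>a'\<in>UNIV. \<bar>f s a'\<bar>)"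
    by (rule member_le_sum) auto
  also have "\<dots> \<le> (\<Sum>s'\<in>UNIV. \<Sum>a'\<in>UNIV. \<bar>f s' a'\<bar>)"
    by (rule member_le_sum[of s UNIV "\<lambda>s. \<Sum>a'\<in>UNIV. \<bar>f s a'\<bar>"]) (auto intro: sum_nonneg)
  finally show ?thesis .
qed

lemma Max_range_obtain:
  fixes f :: "'a::finite \<Rightarrow> 'b::linorder"
  obtains x where "Max (range f) = f x"
proof -
  have "Max (range f) \<in> range f"
    by (rule Max_in) auto
  with that show thesis
    by blast
qed

lemma abs_Max_range_le:
  fixes f :: "'a::finite \<Rightarrow> real"
  assumes "\<And>a. \<bar>f a\<bar> \<le> L"
  shows "\<bar>Max (range f)\<bar> \<le> L"
  using assms by (metis Max_range_obtain)

lemma Max_range_diff_le: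
  fixes f g :: "'a::finite \<Rightarrow> real"
  assumes "\<And>a. \<bar>f a - g a\<bar> \<le> d"
  shows "\<bar>Max (range f) - Max (range g)\<bar> \<le> d"
proof -
  obtain x y where x: "Max (range f) = f x" and y: "Max (range g) = g y"
    by (metis Max_range_obtain)
  have "f x \<le> g x + d" "g x \<le> g y" "g y \<le> f y + d" "f y \<le> f x"
    using assms[of x] assms[of y] Max_ge[of "range g" "g x"] Max_ge[of "range f" "f y"] x y by auto
  with x y show ?thesis
    by linarith
qed

lemma argmax_in_topK:
  fixes g :: "'a::finite \<Rightarrow> real"
  assumes "1 \<le> K" and "g b = Max (range g)"
  shows "b \<in> topK K g"
proof -
  have "{c. g b < g c} = {}"
    using assms(2) Max_ge[of "range g"] by (auto simp: not_less)
  with assms(1) show ?thesis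
    by (simp add: topK_def)
qed

text \<open>If \<open>g\<close> is within \<open>d\<close> of \<open>f\<close> and \<open>k\<close> maximises \<open>f\<close> over the top-\<open>K\<close> actions of \<open>g\<close>,
  then \<open>g k \<ge> f k - d \<ge> f b - d \<ge> Max g - 2 d \<ge> Max f - 3 d\<close>, where \<open>b\<close> maximises \<open>g\<close>.\<close>

lemma min_topK_selection_near_Max:
  fixes f g :: "'a::finite \<Rightarrow> real"
  assumes "1 \<le> K" and close: "\<And>b. \<bar>f b - g b\<bar> \<le> d"
    and "k \<in> topK K g" and k_max: "\<forall>b\<in>topK K g. f b \<le> f k"
  shows "\<bar>min (g k) (Max (range f)) - Max (range f)\<bar> \<le> 3 * d"
proof -
  obtain b where b: "g b = Max (range g)"
    by (metis Max_range_obtain)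
  have "f b \<le> f k"
    using k_max argmax_in_topK[OF assms(1) b] by blast
  moreover have "\<bar>Max (range f) - Max (range g)\<bar> \<le> d"
    by (rule Max_range_diff_le[OF close])
  ultimately show ?thesis
    using close[of k] close[of b] b by linarith
qed

definition clip :: "real \<Rightarrow> real \<Rightarrow> real" where
  "clip N x = max (- N) (min N x)"

lemma abs_clip_le: "\<bar>clip N x\<bar> \<le> \<bar>N\<bar>"
  by (auto simp: clip_def)

lemma clip_eq_self: "\<bar>x\<bar> \<le> N \<Longrightarrow> clip N x = x"
  by (auto simp: clip_def)

lemma abs_convex_comb_le:
  fixes a x y L :: real
  assumes "0 \<le> a" "a \<le> 1" "\<bar>x\<bar> \<le> L" "\<bar>y\<bar> \<le> L"
  shows "\<bar>(1 - a) * x + a * y\<bar> \<le> L"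
proof -
  have "\<bar>(1 - a) * x + a * y\<bar> \<le> (1 - a) * \<bar>x\<bar> + a * \<bar>y\<bar>"
    using assms(1,2) abs_triangle_ineq[of "(1 - a) * x" "a * y"] by (simp add: abs_mult)
  also have "\<dots> \<le> (1 - a) * L + a * L"
    using assms by (intro add_mono mult_left_mono) auto
  finally show ?thesis
    by (simp add: algebra_simps)
qed

lemma abs_stochastic_sum_le:
  fixes p x :: "'s::finite \<Rightarrow> real"
  assumes "\<And>s. 0 \<le> p s" "(\<Sum>s\<in>UNIV. p s) = 1" "\<And>s. \<bar>x s\<bar> \<le> D"
  shows "\<bar>\<Sum>s\<in>UNIV. p s * x s\<bar> \<le> D"
proof -
  have "\<bar>\<Sum>s\<in>UNIV. p s * x s\<bar> \<le> (\<Sum>s\<in>UNIV. p s * D)"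
    using assms(1,3) sum_abs[of "\<lambda>s. p s * x s" UNIV] sum_mono[of UNIV "\<lambda>s. \<bar>p s * x s\<bar>" "\<lambda>s. p s * D"]
    by (force simp: abs_mult mult_left_mono)
  also have "\<dots> = D"
    using assms(2) by (simp add: sum_distrib_right[symmetric])
  finally show ?thesis .
qed

locale acdq_path =
  fixes \<gamma> :: real and K :: nat
    and \<alpha> :: "nat \<Rightarrow> 's::finite \<Rightarrow> 'a::finite \<Rightarrow> real"
    and S :: "nat \<Rightarrow> 's" and A :: "nat \<Rightarrow> 'a" and r :: "nat \<Rightarrow> real" and k :: "nat \<Rightarrow> 'a"
    and QA QB :: "nat \<Rightarrow> 's \<Rightarrow> 'a \<Rightarrow> real"
  assumes gamma_nonneg: "0 \<le> \<gamma>" and gamma_less_1: "\<gamma> < 1" and K_pos: "1 \<le> K"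
    and alpha_nonneg: "\<And>t s a. 0 \<le> \<alpha> t s a" and alpha_le_1: "\<And>t s a. \<alpha> t s a \<le> 1"
    and alpha_off_sample: "\<And>t s a. (s, a) \<noteq> (S t, A t) \<Longrightarrow> \<alpha> t s a = 0"
    and alpha_not_summable: "\<And>s a. \<not> summable (\<lambda>t. \<alpha> t s a)"
    and QA_Suc: "\<And>t s a. QA (Suc t) s a = QA t s a + \<alpha> t s a *
      (r t + \<gamma> * min (QB t (S (Suc t)) (k t)) (Max (range (QA t (S (Suc t))))) - QA t s a)"
    and QB_Suc: "\<And>t s a. QB (Suc t) s a = QB t s a + \<alpha> t s a *
      (r t + \<gamma> * min (QB t (S (Suc t)) (k t)) (Max (range (QA t (S (Suc t))))) - QB t s a)"
    and k_topK: "\<And>t. k t \<in> topK K (QB t (S (Suc t)))"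
    and k_argmax: "\<And>t. \<forall>b\<in>topK K (QB t (S (Suc t))). QA t (S (Suc t)) b \<le> QA t (S (Suc t)) (k t)"
begin

definition target :: "nat \<Rightarrow> real" where
  "target t = r t + \<gamma> * min (QB t (S (Suc t)) (k t)) (Max (range (QA t (S (Suc t)))))"

definition bias :: "nat \<Rightarrow> real" where
  "bias t = target t - (r t + \<gamma> * Max (range (QA t (S (Suc t)))))"

definition next_state_noise :: "('s \<Rightarrow> 'a \<Rightarrow> 's \<Rightarrow> real) \<Rightarrow> nat \<Rightarrow> real" where
  "next_state_noise P t = \<gamma> * Max (range (QA t (S (Suc t))))
    - (\<Sum>s'\<in>UNIV. P (S t) (A t) s' * (\<gamma> * Max (range (QA t s'))))"

lemma QA_minus_QB_tendsto_zero: "(\<lambda>t. QA t s a - QB t s a) \<longlonglongrightarrow> 0"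
proof (rule averaging_tendsto_zero[where w = "\<lambda>_. 0"])
  show "QA (Suc t) s a - QB (Suc t) s a = (1 - \<alpha> t s a) * (QA t s a - QB t s a) + \<alpha> t s a * 0" for t
    by (simp add: QA_Suc QB_Suc algebra_simps)
qed (use alpha_nonneg alpha_le_1 alpha_not_summable in auto)

lemma bias_tendsto_zero: "bias \<longlonglongrightarrow> 0"
proof (rule Lim_null_comparison)
  define dist_AB where "dist_AB t = (\<Sum>s\<in>UNIV. \<Sum>a\<in>UNIV. \<bar>QA t s a - QB t s a\<bar>)" for t
  show "\<forall>\<^sub>F t in sequentially. norm (bias t) \<le> 3 * dist_AB t"
  proof (intro always_eventually allI)
    fix t
    let ?s' = "S (Suc t)"
    let ?gap = "\<bar>min (QB t ?s' (k t)) (Max (range (QA t ?s'))) - Max (range (QA t ?s'))\<bar>"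
    have "\<bar>bias t\<bar> = \<gamma> * ?gap"
      using gamma_nonneg by (simp add: bias_def target_def abs_mult right_diff_distrib[symmetric])
    also have "\<dots> \<le> ?gap"
      using gamma_nonneg gamma_less_1 by (intro mult_left_le_one_le) auto
    also have "\<dots> \<le> 3 * dist_AB t"
      using K_pos abs_le_sum_abs_table[of "\<lambda>s a. QA t s a - QB t s a" ?s'] k_topK k_argmax
      unfolding dist_AB_def by (intro min_topK_selection_near_Max) auto
    finally show "norm (bias t) \<le> 3 * dist_AB t"
      by simp
  qed
  have "dist_AB \<longlonglongrightarrow> (\<Sum>s\<in>(UNIV::'s set). \<Sum>a\<in>(UNIV::'a set). \<bar>0\<bar>)"
    unfolding dist_AB_def by (intro tendsto_sum tendsto_rabs QA_minus_QB_tendsto_zero)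
  then show "(\<lambda>t. 3 * dist_AB t) \<longlonglongrightarrow> 0"
    using tendsto_mult_right_zero by simp
qed

text \<open>Both tables stay within \<open>L\<close> of the running average of the reward noise, because the
  centred targets \<open>R (S t) (A t) + \<gamma> * m\<close> are bounded by \<open>L\<close> as soon as the tables are.\<close>

lemma tables_near_reward_noise_avg:
  fixes R :: "'s \<Rightarrow> 'a \<Rightarrow> real"
  defines "U t s a \<equiv> running_avg (\<lambda>t. \<alpha> t s a) (\<lambda>t. r t - R (S t) (A t)) t"
  assumes U_le: "\<And>t s a. \<bar>U t s a\<bar> \<le> Ub"
    and L: "(\<Sum>s\<in>UNIV. \<Sum>a\<in>UNIV. \<bar>R s a\<bar>) + \<gamma> * (L + Ub) \<le> L"
    and initial: "\<And>s a. \<bar>QA 0 s a\<bar> \<le> L" "\<And>s a. \<bar>QB 0 s a\<bar> \<le> L"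
  shows "\<bar>QA t s a - U t s a\<bar> \<le> L \<and> \<bar>QB t s a - U t s a\<bar> \<le> L"
proof (induction t arbitrary: s a)
  case (Suc t)
  have QA_le: "\<bar>QA t s a\<bar> \<le> L + Ub" and QB_le: "\<bar>QB t s a\<bar> \<le> L + Ub" for s a
    using Suc[of s a] U_le[of t s a] by linarith+
  define m where "m = min (QB t (S (Suc t)) (k t)) (Max (range (QA t (S (Suc t)))))"
  have "\<bar>Max (range (QA t (S (Suc t))))\<bar> \<le> L + Ub"
    by (rule abs_Max_range_le[OF QA_le])
  then have "\<bar>m\<bar> \<le> L + Ub"
    using QB_le[of "S (Suc t)" "k t"] by (auto simp: m_def)
  then have "\<bar>R (S t) (A t) + \<gamma> * m\<bar> \<le> (\<Sum>s\<in>UNIV. \<Sum>a\<in>UNIV. \<bar>R s a\<bar>) + \<gamma> * (L + Ub)"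
    using abs_le_sum_abs_table[of R "S t" "A t"] gamma_nonneg abs_triangle_ineq[of "R (S t) (A t)" "\<gamma> * m"]
      mult_left_mono[of "\<bar>m\<bar>" "L + Ub" \<gamma>]
    by (simp add: abs_mult)
  with L have target_le: "\<bar>R (S t) (A t) + \<gamma> * m\<bar> \<le> L"
    by linarith
  have "QA (Suc t) s a - U (Suc t) s a
      = (1 - \<alpha> t s a) * (QA t s a - U t s a) + \<alpha> t s a * (R (S t) (A t) + \<gamma> * m)"
    "QB (Suc t) s a - U (Suc t) s a
      = (1 - \<alpha> t s a) * (QB t s a - U t s a) + \<alpha> t s a * (R (S t) (A t) + \<gamma> * m)"
    by (simp_all add: QA_Suc QB_Suc U_def m_def algebra_simps)
  with abs_convex_comb_le[OF alpha_nonneg alpha_le_1 _ target_le] Suc[of s a] show ?case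
    by simp
qed (simp add: U_def initial)

lemma QA_bounded:
  assumes reward_noise: "\<And>s a. Bseq (running_avg (\<lambda>t. \<alpha> t s a) (\<lambda>t. r t - R (S t) (A t)))"
  shows "\<exists>B. \<forall>t s a. \<bar>QA t s a\<bar> \<le> B"
proof -
  define U where "U t s a = running_avg (\<lambda>t. \<alpha> t s a) (\<lambda>t. r t - R (S t) (A t)) t" for t s a
  have "\<exists>b. \<forall>t. \<bar>U t s a\<bar> \<le> b" for s a
    using reward_noise[of s a] unfolding Bseq_def U_def by auto
  then obtain b where b: "\<And>t s a. \<bar>U t s a\<bar> \<le> b s a"
    by metis
  define Ub where "Ub = (\<Sum>s\<in>UNIV. \<Sum>a\<in>UNIV. \<bar>b s a\<bar>)"
  have Ub: "\<bar>U t s a\<bar> \<le> Ub" for t s a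
    using b[of t s a] abs_ge_self[of "b s a"] abs_le_sum_abs_table[of b s a] by (simp add: Ub_def)
  define Rm where "Rm = (\<Sum>s\<in>UNIV. \<Sum>a\<in>UNIV. \<bar>R s a\<bar>)"
  define L where "L = max (\<Sum>s\<in>UNIV. \<Sum>a\<in>UNIV. \<bar>\<bar>QA 0 s a\<bar> + \<bar>QB 0 s a\<bar>\<bar>) ((Rm + \<gamma> * Ub) / (1 - \<gamma>))"
  have "(Rm + \<gamma> * Ub) / (1 - \<gamma>) \<le> L"
    by (simp add: L_def)
  then have "Rm + \<gamma> * (L + Ub) \<le> L"
    using gamma_less_1 by (simp add: pos_divide_le_eq algebra_simps)
  moreover have "\<bar>QA 0 s a\<bar> \<le> L" "\<bar>QB 0 s a\<bar> \<le> L" for s a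
    using abs_le_sum_abs_table[of "\<lambda>s a. \<bar>QA 0 s a\<bar> + \<bar>QB 0 s a\<bar>" s a] by (simp_all add: L_def)
  ultimately have near: "\<bar>QA t s a - U t s a\<bar> \<le> L" for t s a
    using tables_near_reward_noise_avg[of R Ub L] Ub unfolding Rm_def U_def by blast
  have "\<bar>QA t s a\<bar> \<le> L + Ub" for t s a
    using near[of t s a] Ub[of t s a] by linarith
  then show ?thesis
    by blast
qed

lemma QA_tendsto_of_noise_tendsto_zero:
  fixes R Qs :: "'s \<Rightarrow> 'a \<Rightarrow> real" and P :: "'s \<Rightarrow> 'a \<Rightarrow> 's \<Rightarrow> real"
  assumes P_nonneg: "\<And>s a s'. 0 \<le> P s a s'" and P_sum: "\<And>s a. (\<Sum>s'\<in>UNIV. P s a s') = 1"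
    and Bellman: "\<And>s a. Qs s a = R s a + \<gamma> * (\<Sum>s'\<in>UNIV. P s a s' * Max (range (Qs s')))"
    and bounded: "\<And>t s a. \<bar>QA t s a\<bar> \<le> B"
    and noise: "\<And>s a.
      running_avg (\<lambda>t. \<alpha> t s a) (\<lambda>t. r t - R (S t) (A t) + next_state_noise P t + bias t) \<longlonglongrightarrow> 0"
  shows "(\<lambda>t. QA t s a) \<longlonglongrightarrow> Qs s a"
proof -
  define \<Delta> where "\<Delta> t = (\<lambda>(s, a). QA t s a - Qs s a)" for t
  define W where "W t = (\<lambda>(s, a).
    running_avg (\<lambda>t. \<alpha> t s a) (\<lambda>t. r t - R (S t) (A t) + next_state_noise P t + bias t) t)" for t
  define G where "G t = \<gamma> * (\<Sum>s'\<in>UNIV. P (S t) (A t) s' * (Max (range (QA t s')) - Max (range (Qs s'))))"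
    for t
  have step: "\<Delta> (Suc t) i - W (Suc t) i = (1 - \<alpha> t (fst i) (snd i)) * (\<Delta> t i - W t i)
      + \<alpha> t (fst i) (snd i) * G t" for t i
  proof (cases i)
    case (Pair s a)
    have "\<alpha> t s a * (target t - Qs s a - (r t - R (S t) (A t) + next_state_noise P t + bias t)) = \<alpha> t s a * G t"
    proof (cases "(s, a) = (S t, A t)")
      case True
      then show ?thesis
        by (simp add: Bellman[of "S t" "A t"] bias_def G_def next_state_noise_def algebra_simps
            sum_subtractf sum_distrib_left)
    qed (simp add: alpha_off_sample)
    then show ?thesis
      unfolding Pair \<Delta>_def W_def by (simp add: QA_Suc target_def algebra_simps)
  qed
  have G_le: "\<bar>G t\<bar> \<le> \<gamma> * D" if "\<And>j. \<bar>\<Delta> t j\<bar> \<le> D" for t D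
  proof -
    have "\<bar>Max (range (QA t s')) - Max (range (Qs s'))\<bar> \<le> D" for s'
      using that[of "(s', _)"] by (intro Max_range_diff_le) (simp add: \<Delta>_def)
    then have "\<bar>\<Sum>s'\<in>UNIV. P (S t) (A t) s' * (Max (range (QA t s')) - Max (range (Qs s')))\<bar> \<le> D"
      by (intro abs_stochastic_sum_le P_nonneg P_sum)
    then show ?thesis
      using gamma_nonneg by (simp add: G_def abs_mult mult_left_mono)
  qed
  have \<Delta>_bounded: "\<bar>\<Delta> t i\<bar> \<le> B + (\<Sum>s\<in>UNIV. \<Sum>a\<in>UNIV. \<bar>Qs s a\<bar>)" for t i
    using bounded[of t "fst i" "snd i"] abs_le_sum_abs_table[of Qs "fst i" "snd i"]
      abs_triangle_ineq4[of "QA t (fst i) (snd i)" "Qs (fst i) (snd i)"]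
    by (simp add: \<Delta>_def split_beta)
  have "(\<lambda>t. \<Delta> t (s, a)) \<longlonglongrightarrow> 0"
    by (rule noisy_contraction_tendsto_zero[where \<beta> = "\<lambda>t i. \<alpha> t (fst i) (snd i)" and W = W and G = "\<lambda>t i. G t"])
       (use gamma_nonneg gamma_less_1 alpha_nonneg alpha_le_1 alpha_not_summable step G_le noise
          \<Delta>_bounded in \<open>auto simp: W_def split_beta\<close>)
  then show ?thesis
    by (simp add: \<Delta>_def LIM_zero_cancel)
qed

text \<open>The
  transition noise is clipped at an arbitrary level \<open>N\<close>, as is needed to make it square-integrable;
  this is harmless because the tables turn out to be bounded.\<close>

theorem tables_tendsto_fixed_point:
  fixes R Qs :: "'s \<Rightarrow> 'a \<Rightarrow> real" and P :: "'s \<Rightarrow> 'a \<Rightarrow> 's \<Rightarrow> real"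
  assumes P_nonneg: "\<And>s a s'. 0 \<le> P s a s'" and P_sum: "\<And>s a. (\<Sum>s'\<in>UNIV. P s a s') = 1"
    and Bellman: "\<And>s a. Qs s a = R s a + \<gamma> * (\<Sum>s'\<in>UNIV. P s a s' * Max (range (Qs s')))"
    and reward_noise: "\<And>s a. running_avg (\<lambda>t. \<alpha> t s a) (\<lambda>t. r t - R (S t) (A t)) \<longlonglongrightarrow> 0"
    and transition_noise: "\<And>s a (N::nat). running_avg (\<lambda>t. \<alpha> t s a)
          (\<lambda>t. \<gamma> * clip N (Max (range (QA t (S (Suc t)))))
            - (\<Sum>s'\<in>UNIV. P (S t) (A t) s' * (\<gamma> * clip N (Max (range (QA t s')))))) \<longlonglongrightarrow> 0"
  shows "(\<lambda>t. QA t s a) \<longlonglongrightarrow> Qs s a \<and> (\<lambda>t. QB t s a) \<longlonglongrightarrow> Qs s a"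
proof -
  obtain B where B: "\<And>t s a. \<bar>QA t s a\<bar> \<le> B"
    using QA_bounded[OF convergent_imp_Bseq[OF convergentI[OF reward_noise]]] by blast
  obtain N :: nat where N: "B \<le> N"
    using real_arch_simple by blast
  have clip_Max: "clip N (Max (range (QA t s'))) = Max (range (QA t s'))" for t s'
  proof (rule clip_eq_self)
    have "\<bar>Max (range (QA t s'))\<bar> \<le> B"
      by (rule abs_Max_range_le) (rule B)
    with N show "\<bar>Max (range (QA t s'))\<bar> \<le> N"
      by simp
  qed
  have "running_avg (\<lambda>t. \<alpha> t s a) bias \<longlonglongrightarrow> 0" for s a
    using alpha_nonneg alpha_le_1 alpha_not_summable bias_tendsto_zero by (intro running_avg_tendsto_zero)
  with reward_noise transition_noise[of _ _ N]
  have "running_avg (\<lambda>t. \<alpha> t s a) (\<lambda>t. r t - R (S t) (A t) + next_state_noise P t + bias t) \<longlonglongrightarrow> 0" for s a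
    unfolding running_avg_add next_state_noise_def clip_Max by (intro tendsto_add_zero)
  from QA_tendsto_of_noise_tendsto_zero[OF P_nonneg P_sum Bellman B this]
  have QA_lim: "(\<lambda>t. QA t s a) \<longlonglongrightarrow> Qs s a" .
  from tendsto_diff[OF QA_lim QA_minus_QB_tendsto_zero[of s a]] have "(\<lambda>t. QB t s a) \<longlonglongrightarrow> Qs s a"
    by simp
  with QA_lim show ?thesis ..
qed

end

lemma acdq_tables_path:
  assumes "0 \<le> \<gamma>" "\<gamma> < 1" "1 \<le> K"
    and "\<forall>t s a. 0 \<le> \<alpha> t s a \<omega> \<and> \<alpha> t s a \<omega> \<le> 1"
    and "\<forall>t s a. (s, a) \<noteq> (S t \<omega>, A t \<omega>) \<longrightarrow> \<alpha> t s a \<omega> = 0"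
    and "\<forall>s a. \<not> summable (\<lambda>t. \<alpha> t s a \<omega>)"
    and aK_sel: "\<And>t. let QA = fst (acdq_tables \<gamma> QA0 QB0 S Rw \<alpha> aK t \<omega>);
             QB = snd (acdq_tables \<gamma> QA0 QB0 S Rw \<alpha> aK t \<omega>);
             s' = S (Suc t) \<omega>
         in aK t \<omega> \<in> topK K (QB s') \<and> (\<forall>b\<in>topK K (QB s'). QA s' b \<le> QA s' (aK t \<omega>))"
  shows "acdq_path \<gamma> K (\<lambda>t s a. \<alpha> t s a \<omega>) (\<lambda>t. S t \<omega>) (\<lambda>t. A t \<omega>) (\<lambda>t. Rw t \<omega>) (\<lambda>t. aK t \<omega>)
    (\<lambda>t. fst (acdq_tables \<gamma> QA0 QB0 S Rw \<alpha> aK t \<omega>)) (\<lambda>t. snd (acdq_tables \<gamma> QA0 QB0 S Rw \<alpha> aK t \<omega>))"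
  using assms by unfold_locales (simp_all add: Let_def)

section \<open>Square-integrable martingale differences\<close>

lemma integrable_mult_square_integrable:
  fixes f g :: "'w \<Rightarrow> real"
  assumes "integrable M (\<lambda>x. (f x)\<^sup>2)" "integrable M (\<lambda>x. (g x)\<^sup>2)"
    and "f \<in> borel_measurable M" "g \<in> borel_measurable M"
  shows "integrable M (\<lambda>x. f x * g x)"
proof (rule Bochner_Integration.integrable_bound[where f = "\<lambda>x. (f x)\<^sup>2 + (g x)\<^sup>2"])
  show "integrable M (\<lambda>x. (f x)\<^sup>2 + (g x)\<^sup>2)"
    using assms by auto
  show "(\<lambda>x. f x * g x) \<in> borel_measurable M"
    using assms by measurable
  have "\<bar>f x\<bar> * \<bar>g x\<bar> \<le> (f x)\<^sup>2 + (g x)\<^sup>2" for x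
  proof -
    have "2 * \<bar>f x\<bar> * \<bar>g x\<bar> \<le> (f x)\<^sup>2 + (g x)\<^sup>2"
      using sum_squares_bound[of "\<bar>f x\<bar>" "\<bar>g x\<bar>"] by (simp add: power2_eq_square)
    then show ?thesis
      using zero_le_mult_iff[of "\<bar>f x\<bar>" "\<bar>g x\<bar>"] by linarith
  qed
  then show "AE x in M. norm (f x * g x) \<le> norm ((f x)\<^sup>2 + (g x)\<^sup>2)"
    by (simp add: abs_mult)
qed

lemma square_integrable_add:
  fixes f g :: "'w \<Rightarrow> real"
  assumes "integrable M (\<lambda>x. (f x)\<^sup>2)" "integrable M (\<lambda>x. (g x)\<^sup>2)"
    and "f \<in> borel_measurable M" "g \<in> borel_measurable M"
  shows "integrable M (\<lambda>x. (f x + g x)\<^sup>2)"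
  using assms integrable_mult_square_integrable[OF assms] by (simp add: power2_sum mult.assoc)

lemma square_integrable_mult_bounded:
  fixes a f :: "'w \<Rightarrow> real"
  assumes "integrable M (\<lambda>x. (f x)\<^sup>2)" "a \<in> borel_measurable M" "f \<in> borel_measurable M"
    and "\<And>x. \<bar>a x\<bar> \<le> B"
  shows "integrable M (\<lambda>x. (a x * f x)\<^sup>2)"
proof (rule Bochner_Integration.integrable_bound[where f = "\<lambda>x. B\<^sup>2 * (f x)\<^sup>2"])
  show "integrable M (\<lambda>x. B\<^sup>2 * (f x)\<^sup>2)"
    using assms(1) by simp
  show "(\<lambda>x. (a x * f x)\<^sup>2) \<in> borel_measurable M"
    using assms(2,3) by measurable
  have "(a x)\<^sup>2 \<le> B\<^sup>2" for x
    using assms(4)[of x] abs_le_square_iff[of "a x" B] by force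
  then show "AE x in M. norm ((a x * f x)\<^sup>2) \<le> norm (B\<^sup>2 * (f x)\<^sup>2)"
    by (simp add: power_mult_distrib mult_right_mono)
qed

lemma integrable_indicator_square:
  fixes f :: "'w \<Rightarrow> real"
  assumes "A \<in> sets M" "integrable M (\<lambda>\<omega>. (f \<omega>)\<^sup>2)"
  shows "integrable M (\<lambda>\<omega>. indicator A \<omega> * (f \<omega>)\<^sup>2)"
  using integrable_mult_indicator[OF assms] by simp

lemma square_mult_measure_le_integral:
  fixes f :: "'w \<Rightarrow> real"
  assumes "finite_measure M" "A \<in> sets M" "integrable M (\<lambda>\<omega>. (f \<omega>)\<^sup>2)"
    and "0 \<le> c" "\<And>\<omega>. \<omega> \<in> A \<Longrightarrow> c \<le> \<bar>f \<omega>\<bar>"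
  shows "c\<^sup>2 * measure M A \<le> (\<integral>\<omega>. indicator A \<omega> * (f \<omega>)\<^sup>2 \<partial>M)"
proof -
  have "c\<^sup>2 * measure M A = (\<integral>\<omega>. indicator A \<omega> * c\<^sup>2 \<partial>M)"
    using assms(2) by simp
  also have "\<dots> \<le> (\<integral>\<omega>. indicator A \<omega> * (f \<omega>)\<^sup>2 \<partial>M)"
  proof (rule integral_mono)
    show "integrable M (\<lambda>\<omega>. indicator A \<omega> * c\<^sup>2)"
      using assms(1,2) by (intro integrable_mult_left integrable_real_indicator)
        (auto simp: finite_measure.emeasure_finite less_top[symmetric])
    show "integrable M (\<lambda>\<omega>. indicator A \<omega> * (f \<omega>)\<^sup>2)"
      using assms(2,3) by (rule integrable_indicator_square)
    show "indicator A \<omega> * c\<^sup>2 \<le> indicator A \<omega> * (f \<omega>)\<^sup>2" for \<omega>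
      using assms(4) assms(5)[of \<omega>] abs_le_square_iff[of c "f \<omega>"] by (auto simp: indicator_def)
  qed
  finally show ?thesis .
qed

lemma sum_truncated_partial_sums_le:
  fixes p :: "nat \<Rightarrow> real"
  assumes p: "\<And>i. 0 \<le> p i" and "0 \<le> N"
  shows "(\<Sum>k<n. if (\<Sum>i\<le>k. p i) \<le> N then p k else 0) \<le> N"
proof -
  have "(\<Sum>k<n. if (\<Sum>i\<le>k. p i) \<le> N then p k else 0) \<le> N \<and>
    ((\<Sum>i<n. p i) \<le> N \<longrightarrow> (\<Sum>k<n. if (\<Sum>i\<le>k. p i) \<le> N then p k else 0) = (\<Sum>i<n. p i))"
  proof (induction n)
    case (Suc n)
    have "(\<Sum>i<n. p i) \<le> (\<Sum>i\<le>n. p i)"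
      using p[of n] by (simp add: lessThan_Suc_atMost[symmetric])
    with Suc show ?case
      by (cases "(\<Sum>i\<le>n. p i) \<le> N") (simp_all add: lessThan_Suc_atMost[symmetric])
  qed (use \<open>0 \<le> N\<close> in simp)
  then show ?thesis ..
qed

text \<open>The martingale property is used in its weak \<open>L\<^sup>2\<close> form: each increment is orthogonal to
  every square-integrable function of the past.\<close>

locale L2_martingale_diff = prob_space M + filtration "space M" G
  for M :: "'w measure" and G :: "nat \<Rightarrow> 'w measure" +
  fixes d :: "nat \<Rightarrow> 'w \<Rightarrow> real"
  assumes subalgebra: "\<And>k. subalgebra M (G k)"
    and d_measurable: "\<And>k. d k \<in> borel_measurable (G (Suc k))"
    and d_square_integrable: "\<And>k. integrable M (\<lambda>\<omega>. (d k \<omega>)\<^sup>2)"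
    and d_orthogonal: "\<And>k \<eta>. \<eta> \<in> borel_measurable (G k) \<Longrightarrow> integrable M (\<lambda>\<omega>. (\<eta> \<omega>)\<^sup>2) \<Longrightarrow>
        (\<integral>\<omega>. \<eta> \<omega> * d k \<omega> \<partial>M) = 0"
begin

lemma measurable_G_mono: "f \<in> borel_measurable (G i) \<Longrightarrow> i \<le> j \<Longrightarrow> f \<in> borel_measurable (G j)"
  by (rule measurable_from_subalg[of _ "G i"]) (auto simp: subalgebra_def space_F sets_F_mono)

lemma measurable_G_M: "f \<in> borel_measurable (G i) \<Longrightarrow> f \<in> borel_measurable M"
  by (rule measurable_from_subalg[OF subalgebra])

lemma sets_G_M: "A \<in> sets (G i) \<Longrightarrow> A \<in> sets M"
  using subalgebra[of i] by (auto simp: subalgebra_def)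

definition partial_sum :: "nat \<Rightarrow> nat \<Rightarrow> 'w \<Rightarrow> real" where
  "partial_sum n j \<omega> = (\<Sum>k\<in>{n..<n + j}. d k \<omega>)"

lemma partial_sum_0 [simp]: "partial_sum n 0 \<omega> = 0"
  by (simp add: partial_sum_def)

lemma partial_sum_Suc: "partial_sum n (Suc j) \<omega> = partial_sum n j \<omega> + d (n + j) \<omega>"
  by (simp add: partial_sum_def)

lemma partial_sum_measurable: "partial_sum n j \<in> borel_measurable (G (n + j))"
proof (induction j)
  case (Suc j)
  have "partial_sum n j \<in> borel_measurable (G (n + Suc j))"
    by (rule measurable_G_mono[OF Suc]) simp
  moreover have "d (n + j) \<in> borel_measurable (G (n + Suc j))"
    using d_measurable[of "n + j"] by simp
  ultimately show ?case
    unfolding partial_sum_Suc[abs_def] by measurable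
qed (simp add: partial_sum_def[abs_def])

lemma partial_sum_measurable_M [measurable]: "partial_sum n j \<in> borel_measurable M"
  by (rule measurable_G_M[OF partial_sum_measurable])

lemma d_measurable_M [measurable]: "d k \<in> borel_measurable M"
  by (rule measurable_G_M[OF d_measurable])

lemma partial_sum_square_integrable: "integrable M (\<lambda>\<omega>. (partial_sum n j \<omega>)\<^sup>2)"
proof (induction j)
  case (Suc j)
  then show ?case
    unfolding partial_sum_Suc by (intro square_integrable_add d_square_integrable) simp_all
qed simp

lemma integral_indicator_partial_sum_Suc:
  assumes A: "A \<in> sets (G (n + j))"
  shows "(\<integral>\<omega>. indicator A \<omega> * (partial_sum n (Suc j) \<omega>)\<^sup>2 \<partial>M)
       = (\<integral>\<omega>. indicator A \<omega> * (partial_sum n j \<omega>)\<^sup>2 \<partial>M)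
         + (\<integral>\<omega>. indicator A \<omega> * (d (n + j) \<omega>)\<^sup>2 \<partial>M)"
proof -
  have AM: "A \<in> sets M"
    by (rule sets_G_M[OF A])
  define \<eta> where "\<eta> \<omega> = indicator A \<omega> * partial_sum n j \<omega>" for \<omega>
  have \<eta>_measurable: "\<eta> \<in> borel_measurable (G (n + j))"
    unfolding \<eta>_def using A partial_sum_measurable by measurable
  have "(\<lambda>\<omega>. (\<eta> \<omega>)\<^sup>2) = (\<lambda>\<omega>. indicator A \<omega> * (partial_sum n j \<omega>)\<^sup>2)"
    by (auto simp: \<eta>_def indicator_def fun_eq_iff)
  then have \<eta>_square_integrable: "integrable M (\<lambda>\<omega>. (\<eta> \<omega>)\<^sup>2)"
    using integrable_indicator_square[OF AM partial_sum_square_integrable] by simp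
  have "indicator A \<omega> * (partial_sum n (Suc j) \<omega>)\<^sup>2
     = indicator A \<omega> * (partial_sum n j \<omega>)\<^sup>2 + 2 * (\<eta> \<omega> * d (n + j) \<omega>)
       + indicator A \<omega> * (d (n + j) \<omega>)\<^sup>2" for \<omega>
    by (simp add: partial_sum_Suc \<eta>_def power2_sum algebra_simps)
  moreover have "integrable M (\<lambda>\<omega>. \<eta> \<omega> * d (n + j) \<omega>)"
    using \<eta>_measurable by (intro integrable_mult_square_integrable \<eta>_square_integrable
        d_square_integrable measurable_G_M d_measurable_M)
  moreover have "(\<integral>\<omega>. \<eta> \<omega> * d (n + j) \<omega> \<partial>M) = 0"
    by (rule d_orthogonal[OF \<eta>_measurable \<eta>_square_integrable])
  ultimately show ?thesis
    using AM by (simp add: integrable_indicator_square partial_sum_square_integrable d_square_integrable)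
qed

lemma integral_indicator_partial_sum_mono:
  assumes "j \<le> J" "A \<in> sets (G (n + j))"
  shows "(\<integral>\<omega>. indicator A \<omega> * (partial_sum n j \<omega>)\<^sup>2 \<partial>M)
    \<le> (\<integral>\<omega>. indicator A \<omega> * (partial_sum n J \<omega>)\<^sup>2 \<partial>M)"
  using assms(1)
proof (induction J rule: dec_induct)
  case (step J)
  have "A \<in> sets (G (n + J))"
    using assms(2) sets_F_mono[of "n + j" "n + J"] step by auto
  from integral_indicator_partial_sum_Suc[OF this]
  have "(\<integral>\<omega>. indicator A \<omega> * (partial_sum n J \<omega>)\<^sup>2 \<partial>M)
      \<le> (\<integral>\<omega>. indicator A \<omega> * (partial_sum n (Suc J) \<omega>)\<^sup>2 \<partial>M)"
    using integral_nonneg_AE[of "\<lambda>\<omega>. indicator A \<omega> * (d (n + J) \<omega>)\<^sup>2" M] by simp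
  with step.IH show ?case
    by linarith
qed simp

lemma integral_partial_sum_square:
  "(\<integral>\<omega>. (partial_sum n J \<omega>)\<^sup>2 \<partial>M) = (\<Sum>i<J. \<integral>\<omega>. (d (n + i) \<omega>)\<^sup>2 \<partial>M)"
proof (induction J)
  case (Suc J)
  have "space M \<in> sets (G (n + J))"
    using sets.top[of "G (n + J)"] by (simp add: space_F)
  moreover have "(\<integral>\<omega>. indicator (space M) \<omega> * f \<omega> \<partial>M) = (\<integral>\<omega>. f \<omega> \<partial>M)" for f :: "'w \<Rightarrow> real"
    by (rule Bochner_Integration.integral_cong) auto
  ultimately show ?case
    using integral_indicator_partial_sum_Suc[of "space M" n J] Suc by simp
qed simp

text \<open>The event is split according to the first index \<open>j\<close> at which the partial sum reaches \<open>c\<close>;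
  that piece belongs to \<open>G (n + j)\<close>.\<close>

lemma kolmogorov_maximal_inequality:
  assumes "0 < c"
  shows "c\<^sup>2 * measure M {\<omega>\<in>space M. \<exists>j\<le>J. c \<le> \<bar>partial_sum n j \<omega>\<bar>}
    \<le> (\<integral>\<omega>. (partial_sum n J \<omega>)\<^sup>2 \<partial>M)"
proof -
  define E where "E j = {\<omega>\<in>space M. c \<le> \<bar>partial_sum n j \<omega>\<bar>}" for j
  define I where "I = {0..<Suc J}"
  have "E i \<in> sets (G (n + j))" if "i \<le> j" for i j
  proof -
    have [measurable]: "partial_sum n i \<in> borel_measurable (G (n + j))"
      using measurable_G_mono[OF partial_sum_measurable] that by simp
    have "{\<omega>\<in>space (G (n + j)). c \<le> \<bar>partial_sum n i \<omega>\<bar>} \<in> sets (G (n + j))"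
      by measurable
    then show ?thesis
      by (simp add: E_def space_F)
  qed
  then have first_G: "disjointed E j \<in> sets (G (n + j))" for j
    unfolding disjointed_def by (intro sets.Diff sets.finite_UN) auto
  have first_M: "disjointed E j \<in> sets M" for j
    by (rule sets_G_M[OF first_G])
  have disjoint: "disjoint_family_on (disjointed E) I"
    using disjoint_family_disjointed by (rule disjoint_family_on_mono[rotated]) simp
  have "c\<^sup>2 * measure M (\<Union>j\<in>I. disjointed E j) = (\<Sum>j\<in>I. c\<^sup>2 * measure M (disjointed E j))"
    using first_M disjoint by (subst measure_finite_Union) (auto simp: I_def sum_distrib_left[symmetric])
  also have "\<dots> \<le> (\<Sum>j\<in>I. \<integral>\<omega>. indicator (disjointed E j) \<omega> * (partial_sum n j \<omega>)\<^sup>2 \<partial>M)"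
    using \<open>0 < c\<close> disjointed_subset[of E] by (intro sum_mono square_mult_measure_le_integral
        finite_measure_axioms first_M partial_sum_square_integrable) (auto simp: E_def)
  also have "\<dots> \<le> (\<Sum>j\<in>I. \<integral>\<omega>. indicator (disjointed E j) \<omega> * (partial_sum n J \<omega>)\<^sup>2 \<partial>M)"
    by (intro sum_mono integral_indicator_partial_sum_mono first_G) (simp add: I_def)
  also have "\<dots> = (\<integral>\<omega>. (\<Sum>j\<in>I. indicator (disjointed E j) \<omega> * (partial_sum n J \<omega>)\<^sup>2) \<partial>M)"
    by (intro Bochner_Integration.integral_sum[symmetric] integrable_indicator_square
        partial_sum_square_integrable first_M)
  also have "\<dots> = (\<integral>\<omega>. indicator (\<Union>j\<in>I. disjointed E j) \<omega> * (partial_sum n J \<omega>)\<^sup>2 \<partial>M)"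
  proof -
    have "indicator (\<Union>j\<in>I. disjointed E j) \<omega> = (\<Sum>j\<in>I. indicator (disjointed E j) \<omega> :: real)" for \<omega>
      using disjoint by (rule indicator_UN_disjoint[rotated]) (simp add: I_def)
    then show ?thesis
      by (simp add: sum_distrib_right)
  qed
  also have "\<dots> \<le> (\<integral>\<omega>. (partial_sum n J \<omega>)\<^sup>2 \<partial>M)"
    using first_M by (intro integral_mono integrable_indicator_square partial_sum_square_integrable)
      (auto simp: indicator_def I_def)
  moreover have "(\<Union>j\<in>I. disjointed E j) = {\<omega>\<in>space M. \<exists>j\<le>J. c \<le> \<bar>partial_sum n j \<omega>\<bar>}"
    unfolding I_def finite_UN_disjointed_eq by (auto simp: E_def less_Suc_eq_le)
  ultimately show ?thesis
    by simp
qed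

lemma measure_exists_partial_sum_gt_le:
  assumes "0 < c" and summable: "summable (\<lambda>k. \<integral>\<omega>. (d k \<omega>)\<^sup>2 \<partial>M)"
  shows "measure M {\<omega>\<in>space M. \<exists>j. c < \<bar>partial_sum n j \<omega>\<bar>}
    \<le> (\<Sum>i. \<integral>\<omega>. (d (i + n) \<omega>)\<^sup>2 \<partial>M) / c\<^sup>2"
proof -
  define B where "B J = {\<omega>\<in>space M. \<exists>j\<le>J. c < \<bar>partial_sum n j \<omega>\<bar>}" for J
  have B_sets: "B J \<in> sets M" for J
    unfolding B_def by measurable
  have "incseq B"
    by (rule incseq_SucI) (auto simp: B_def intro: le_SucI)
  then have "(\<lambda>J. measure M (B J)) \<longlonglongrightarrow> measure M (\<Union>J. B J)"
    using B_sets by (intro finite_Lim_measure_incseq) auto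
  moreover have "measure M (B J) \<le> (\<Sum>i. \<integral>\<omega>. (d (i + n) \<omega>)\<^sup>2 \<partial>M) / c\<^sup>2" for J
  proof -
    have "B J \<subseteq> {\<omega>\<in>space M. \<exists>j\<le>J. c \<le> \<bar>partial_sum n j \<omega>\<bar>}"
      by (auto simp: B_def)
    then have "c\<^sup>2 * measure M (B J) \<le> c\<^sup>2 * measure M {\<omega>\<in>space M. \<exists>j\<le>J. c \<le> \<bar>partial_sum n j \<omega>\<bar>}"
      by (intro mult_left_mono finite_measure_mono) auto
    also have "\<dots> \<le> (\<integral>\<omega>. (partial_sum n J \<omega>)\<^sup>2 \<partial>M)"
      by (rule kolmogorov_maximal_inequality[OF \<open>0 < c\<close>])
    also have "\<dots> = (\<Sum>i<J. \<integral>\<omega>. (d (i + n) \<omega>)\<^sup>2 \<partial>M)"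
      by (simp add: integral_partial_sum_square add.commute)
    also have "\<dots> \<le> (\<Sum>i. \<integral>\<omega>. (d (i + n) \<omega>)\<^sup>2 \<partial>M)"
      using summable summable_iff_shift[of "\<lambda>k. \<integral>\<omega>. (d k \<omega>)\<^sup>2 \<partial>M" n]
      by (intro sum_le_suminf) auto
    finally show ?thesis
      using \<open>0 < c\<close> by (simp add: field_simps)
  qed
  ultimately have "measure M (\<Union>J. B J) \<le> (\<Sum>i. \<integral>\<omega>. (d (i + n) \<omega>)\<^sup>2 \<partial>M) / c\<^sup>2"
    by (intro LIMSEQ_le_const2) auto
  moreover have "(\<Union>J. B J) = {\<omega>\<in>space M. \<exists>j. c < \<bar>partial_sum n j \<omega>\<bar>}"
    by (auto simp: B_def)
  ultimately show ?thesis
    by simp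
qed

lemma AE_partial_sums_small:
  assumes "0 < \<epsilon>" and summable: "summable (\<lambda>k. \<integral>\<omega>. (d k \<omega>)\<^sup>2 \<partial>M)"
  shows "AE \<omega> in M. \<exists>n. \<forall>j. \<bar>partial_sum n j \<omega>\<bar> \<le> \<epsilon>"
proof (rule AE_I')
  define Z where "Z = {\<omega>\<in>space M. \<forall>n. \<exists>j. \<epsilon> < \<bar>partial_sum n j \<omega>\<bar>}"
  have Z_sets: "Z \<in> sets M"
    unfolding Z_def by measurable
  have "measure M Z \<le> (\<Sum>i. \<integral>\<omega>. (d (i + n) \<omega>)\<^sup>2 \<partial>M) / \<epsilon>\<^sup>2" for n
  proof -
    have "measure M Z \<le> measure M {\<omega>\<in>space M. \<exists>j. \<epsilon> < \<bar>partial_sum n j \<omega>\<bar>}"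
      by (intro finite_measure_mono) (auto simp: Z_def)
    also have "\<dots> \<le> (\<Sum>i. \<integral>\<omega>. (d (i + n) \<omega>)\<^sup>2 \<partial>M) / \<epsilon>\<^sup>2"
      by (rule measure_exists_partial_sum_gt_le[OF assms])
    finally show ?thesis .
  qed
  moreover have "(\<lambda>n. (\<Sum>i. \<integral>\<omega>. (d (i + n) \<omega>)\<^sup>2 \<partial>M) / \<epsilon>\<^sup>2) \<longlonglongrightarrow> 0 / \<epsilon>\<^sup>2"
    by (intro tendsto_divide tendsto_const suminf_exist_split2 summable) (use \<open>0 < \<epsilon>\<close> in auto)
  ultimately have "measure M Z \<le> 0"
    by (intro LIMSEQ_le_const) auto
  then show "Z \<in> null_sets M"
    using Z_sets measure_nonneg[of M Z] by (simp add: emeasure_eq_measure null_sets_def)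
  show "{\<omega>\<in>space M. \<not> (\<exists>n. \<forall>j. \<bar>partial_sum n j \<omega>\<bar> \<le> \<epsilon>)} \<subseteq> Z"
    by (auto simp: Z_def not_le)
qed

theorem summable_AE:
  assumes summable: "summable (\<lambda>k. \<integral>\<omega>. (d k \<omega>)\<^sup>2 \<partial>M)"
  shows "AE \<omega> in M. summable (\<lambda>k. d k \<omega>)"
proof -
  have "AE \<omega> in M. \<forall>m. \<exists>n. \<forall>j. \<bar>partial_sum n j \<omega>\<bar> \<le> 1 / Suc m"
    using AE_partial_sums_small[OF _ summable] by (simp add: AE_all_countable)
  then show ?thesis
  proof eventually_elim
    case (elim \<omega>)
    show "summable (\<lambda>k. d k \<omega>)"
      unfolding summable_Cauchy
    proof (intro allI impI)
      fix e :: real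
      assume "0 < e"
      then obtain m where m: "1 / Suc m < e / 2"
        using reals_Archimedean[of "e / 2"] by (auto simp: inverse_eq_divide)
      obtain n where n: "\<And>j. \<bar>partial_sum n j \<omega>\<bar> \<le> 1 / Suc m"
        using elim by blast
      have "norm (\<Sum>k\<in>{p..<q}. d k \<omega>) < e" if "n \<le> p" for p q
      proof (cases "p \<le> q")
        case True
        have "(\<Sum>k\<in>{p..<q}. d k \<omega>) = partial_sum n (q - n) \<omega> - partial_sum n (p - n) \<omega>"
          using sum_diff_nat_ivl[of n p q "\<lambda>k. d k \<omega>"] that True by (simp add: partial_sum_def)
        then show ?thesis
          using n[of "q - n"] n[of "p - n"] m
            abs_triangle_ineq4[of "partial_sum n (q - n) \<omega>" "partial_sum n (p - n) \<omega>"]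
          by simp
      qed (use \<open>0 < e\<close> in simp)
      then show "\<exists>N. \<forall>p\<ge>N. \<forall>q. norm (\<Sum>k\<in>{p..<q}. d k \<omega>) < e"
        by blast
    qed
  qed
qed

lemma L2_martingale_diff_mult:
  assumes c_measurable: "\<And>k. c k \<in> borel_measurable (G k)" and c_bounded: "\<And>k \<omega>. \<bar>c k \<omega>\<bar> \<le> B"
  shows "L2_martingale_diff M G (\<lambda>k \<omega>. c k \<omega> * d k \<omega>)"
proof (rule L2_martingale_diff.intro[OF prob_space_axioms filtration_axioms], unfold_locales)
  fix k
  show "subalgebra M (G k)"
    by (rule subalgebra)
  have [measurable]: "c k \<in> borel_measurable (G (Suc k))"
    by (rule measurable_G_mono[OF c_measurable]) simp
  show "(\<lambda>\<omega>. c k \<omega> * d k \<omega>) \<in> borel_measurable (G (Suc k))"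
    using d_measurable by measurable
  show "integrable M (\<lambda>\<omega>. (c k \<omega> * d k \<omega>)\<^sup>2)"
    using c_bounded by (intro square_integrable_mult_bounded d_square_integrable
        measurable_G_M[OF c_measurable] d_measurable_M)
  fix \<eta> :: "'w \<Rightarrow> real"
  assume \<eta>: "\<eta> \<in> borel_measurable (G k)" "integrable M (\<lambda>\<omega>. (\<eta> \<omega>)\<^sup>2)"
  have "(\<lambda>\<omega>. c k \<omega> * \<eta> \<omega>) \<in> borel_measurable (G k)"
    using c_measurable \<eta>(1) by measurable
  moreover have "integrable M (\<lambda>\<omega>. (c k \<omega> * \<eta> \<omega>)\<^sup>2)"
    using c_bounded \<eta> by (intro square_integrable_mult_bounded measurable_G_M[OF c_measurable]
        measurable_G_M[OF \<eta>(1)])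
  ultimately have "(\<integral>\<omega>. (c k \<omega> * \<eta> \<omega>) * d k \<omega> \<partial>M) = 0"
    by (rule d_orthogonal)
  then show "(\<integral>\<omega>. \<eta> \<omega> * (c k \<omega> * d k \<omega>) \<partial>M) = 0"
    by (simp add: mult_ac)
qed

lemma L2_martingale_diff_add:
  assumes "L2_martingale_diff M G e"
  shows "L2_martingale_diff M G (\<lambda>k \<omega>. d k \<omega> + e k \<omega>)"
proof (rule L2_martingale_diff.intro[OF prob_space_axioms filtration_axioms], unfold_locales)
  interpret e: L2_martingale_diff M G e
    by (rule assms)
  fix k
  show "subalgebra M (G k)"
    by (rule subalgebra)
  show "(\<lambda>\<omega>. d k \<omega> + e k \<omega>) \<in> borel_measurable (G (Suc k))"
    using d_measurable e.d_measurable by measurable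
  show "integrable M (\<lambda>\<omega>. (d k \<omega> + e k \<omega>)\<^sup>2)"
    by (intro square_integrable_add d_square_integrable e.d_square_integrable d_measurable_M e.d_measurable_M)
  fix \<eta> :: "'w \<Rightarrow> real"
  assume \<eta>: "\<eta> \<in> borel_measurable (G k)" "integrable M (\<lambda>\<omega>. (\<eta> \<omega>)\<^sup>2)"
  have "integrable M (\<lambda>\<omega>. \<eta> \<omega> * d k \<omega>)" "integrable M (\<lambda>\<omega>. \<eta> \<omega> * e k \<omega>)"
    using \<eta> by (intro integrable_mult_square_integrable d_square_integrable e.d_square_integrable
        d_measurable_M e.d_measurable_M measurable_G_M[OF \<eta>(1)]; simp)+
  with d_orthogonal[OF \<eta>] e.d_orthogonal[OF \<eta>] show "(\<integral>\<omega>. \<eta> \<omega> * (d k \<omega> + e k \<omega>) \<partial>M) = 0"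
    by (simp add: distrib_left)
qed

lemma L2_martingale_diff_sum:
  assumes "finite I" "\<And>i. i \<in> I \<Longrightarrow> L2_martingale_diff M G (e i)"
  shows "L2_martingale_diff M G (\<lambda>k \<omega>. \<Sum>i\<in>I. e i k \<omega>)"
  using assms
proof (induction I rule: finite_induct)
  case empty
  have "L2_martingale_diff M G (\<lambda>k \<omega>. 0 * d k \<omega>)"
    by (rule L2_martingale_diff_mult[where B = 0]) auto
  then show ?case
    by simp
next
  case (insert i I)
  interpret e: L2_martingale_diff M G "e i"
    using insert.prems by blast
  from e.L2_martingale_diff_add[OF insert.IH] insert.prems insert.hyps show ?case
    by simp
qed

lemma weighted_summable_AE_of_square_sum_le:
  assumes var_bound: "\<And>k \<eta>. \<eta> \<in> borel_measurable (G k) \<Longrightarrow> (\<And>\<omega>. 0 \<le> \<eta> \<omega>) \<Longrightarrow> (\<And>\<omega>. \<eta> \<omega> \<le> 1) \<Longrightarrow>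
        (\<integral>\<omega>. \<eta> \<omega> * (d k \<omega>)\<^sup>2 \<partial>M) \<le> C * (\<integral>\<omega>. \<eta> \<omega> \<partial>M)"
    and c_measurable: "\<And>k. c k \<in> borel_measurable (G k)" and c_bounded: "\<And>k \<omega>. \<bar>c k \<omega>\<bar> \<le> 1"
    and square_sum: "\<And>n \<omega>. (\<Sum>k<n. (c k \<omega>)\<^sup>2) \<le> N"
  shows "AE \<omega> in M. summable (\<lambda>k. c k \<omega> * d k \<omega>)"
proof -
  interpret weighted: L2_martingale_diff M G "\<lambda>k \<omega>. c k \<omega> * d k \<omega>"
    by (rule L2_martingale_diff_mult[OF c_measurable c_bounded])
  have c_square_integrable: "integrable M (\<lambda>\<omega>. (c k \<omega>)\<^sup>2)" for k
    using c_bounded measurable_G_M[OF c_measurable]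
    by (intro integrable_const_bound[where B = 1]) (auto simp: abs_square_le_1)
  have variance: "(\<integral>\<omega>. (c k \<omega> * d k \<omega>)\<^sup>2 \<partial>M) \<le> \<bar>C\<bar> * (\<integral>\<omega>. (c k \<omega>)\<^sup>2 \<partial>M)" for k
  proof -
    have "(\<integral>\<omega>. (c k \<omega> * d k \<omega>)\<^sup>2 \<partial>M) \<le> C * (\<integral>\<omega>. (c k \<omega>)\<^sup>2 \<partial>M)"
      using var_bound[of "\<lambda>\<omega>. (c k \<omega>)\<^sup>2" k] c_measurable c_bounded
      by (simp add: power_mult_distrib abs_square_le_1)
    also have "\<dots> \<le> \<bar>C\<bar> * (\<integral>\<omega>. (c k \<omega>)\<^sup>2 \<partial>M)"
      by (intro mult_right_mono integral_nonneg_AE) auto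
    finally show ?thesis .
  qed
  have "(\<Sum>k<n. \<integral>\<omega>. (c k \<omega> * d k \<omega>)\<^sup>2 \<partial>M) \<le> \<bar>C\<bar> * N" for n
  proof -
    have "(\<Sum>k<n. \<integral>\<omega>. (c k \<omega> * d k \<omega>)\<^sup>2 \<partial>M) \<le> (\<Sum>k<n. \<bar>C\<bar> * (\<integral>\<omega>. (c k \<omega>)\<^sup>2 \<partial>M))"
      by (rule sum_mono) (rule variance)
    also have "\<dots> = \<bar>C\<bar> * (\<integral>\<omega>. (\<Sum>k<n. (c k \<omega>)\<^sup>2) \<partial>M)"
      using c_square_integrable by (simp add: sum_distrib_left)
    also have "\<dots> \<le> \<bar>C\<bar> * (\<integral>\<omega>. N \<partial>M)"
      by (intro mult_left_mono integral_mono) (use c_square_integrable square_sum in auto)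
    finally show ?thesis
      by (simp add: prob_space)
  qed
  then have "summable (\<lambda>k. \<integral>\<omega>. (c k \<omega> * d k \<omega>)\<^sup>2 \<partial>M)"
    by (intro summableI_nonneg_bounded[where x = "\<bar>C\<bar> * N"]) auto
  then show ?thesis
    by (rule weighted.summable_AE)
qed

text \<open>The weights are truncated once their squares have summed up to \<open>N\<close>; on the event
  \<open>\<Sum>k. (\<beta> k)\<^sup>2 \<le> N\<close> nothing is truncated.\<close>

theorem weighted_summable_AE:
  assumes var_bound: "\<And>k \<eta>. \<eta> \<in> borel_measurable (G k) \<Longrightarrow> (\<And>\<omega>. 0 \<le> \<eta> \<omega>) \<Longrightarrow> (\<And>\<omega>. \<eta> \<omega> \<le> 1) \<Longrightarrow>
        (\<integral>\<omega>. \<eta> \<omega> * (d k \<omega>)\<^sup>2 \<partial>M) \<le> C * (\<integral>\<omega>. \<eta> \<omega> \<partial>M)"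
    and \<beta>_measurable: "\<And>k. \<beta> k \<in> borel_measurable (G k)"
    and \<beta>_range: "AE \<omega> in M. \<forall>k. 0 \<le> \<beta> k \<omega> \<and> \<beta> k \<omega> \<le> 1"
    and \<beta>_square_summable: "AE \<omega> in M. summable (\<lambda>k. (\<beta> k \<omega>)\<^sup>2)"
  shows "AE \<omega> in M. summable (\<lambda>k. \<beta> k \<omega> * d k \<omega>)"
proof -
  define b where "b k \<omega> = max 0 (min 1 (\<beta> k \<omega>))" for k \<omega>
  have b_measurable [measurable]: "b i \<in> borel_measurable (G k)" if "i \<le> k" for i k
    unfolding b_def using measurable_G_mono[OF \<beta>_measurable that] by measurable
  define c where "c N k \<omega> = (if (\<Sum>i\<le>k. (b i \<omega>)\<^sup>2) \<le> real N then b k \<omega> else 0)" for N k \<omega>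
  have "AE \<omega> in M. summable (\<lambda>k. c N k \<omega> * d k \<omega>)" for N
  proof (rule weighted_summable_AE_of_square_sum_le[OF var_bound])
    show "c N k \<in> borel_measurable (G k)" for k
      unfolding c_def by measurable auto
    show "\<bar>c N k \<omega>\<bar> \<le> 1" for k \<omega>
      by (auto simp: c_def b_def)
    have "(c N k \<omega>)\<^sup>2 = (if (\<Sum>i\<le>k. (b i \<omega>)\<^sup>2) \<le> real N then (b k \<omega>)\<^sup>2 else 0)" for k \<omega>
      by (simp add: c_def)
    then show "(\<Sum>k<n. (c N k \<omega>)\<^sup>2) \<le> real N" for n \<omega>
      using sum_truncated_partial_sums_le[of "\<lambda>i. (b i \<omega>)\<^sup>2" "real N" n] by simp
  qed
  then have "AE \<omega> in M. \<forall>N. summable (\<lambda>k. c N k \<omega> * d k \<omega>)"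
    by (simp add: AE_all_countable)
  then show ?thesis
    using \<beta>_range \<beta>_square_summable
  proof eventually_elim
    case (elim \<omega>)
    have b_eq: "b k \<omega> = \<beta> k \<omega>" for k
      using elim(2) by (auto simp: b_def)
    obtain N :: nat where N: "(\<Sum>k. (\<beta> k \<omega>)\<^sup>2) \<le> N"
      using real_arch_simple by blast
    have "c N k \<omega> = \<beta> k \<omega>" for k
    proof -
      have "(\<Sum>i\<le>k. (\<beta> i \<omega>)\<^sup>2) \<le> (\<Sum>k. (\<beta> k \<omega>)\<^sup>2)"
        using elim(3) by (intro sum_le_suminf) auto
      with N show ?thesis
        by (simp add: c_def b_eq)
    qed
    then have "(\<lambda>k. c N k \<omega> * d k \<omega>) = (\<lambda>k. \<beta> k \<omega> * d k \<omega>)"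
      by simp
    with elim(1) show ?case
      by metis
  qed
qed

lemma running_avg_tendsto_zero_AE:
  assumes var_bound: "\<And>k \<eta>. \<eta> \<in> borel_measurable (G k) \<Longrightarrow> (\<And>\<omega>. 0 \<le> \<eta> \<omega>) \<Longrightarrow> (\<And>\<omega>. \<eta> \<omega> \<le> 1) \<Longrightarrow>
        (\<integral>\<omega>. \<eta> \<omega> * (d k \<omega>)\<^sup>2 \<partial>M) \<le> C * (\<integral>\<omega>. \<eta> \<omega> \<partial>M)"
    and \<beta>_measurable: "\<And>k. \<beta> k \<in> borel_measurable (G k)"
    and \<beta>_range: "AE \<omega> in M. \<forall>k. 0 \<le> \<beta> k \<omega> \<and> \<beta> k \<omega> \<le> 1"
    and \<beta>_square_summable: "AE \<omega> in M. summable (\<lambda>k. (\<beta> k \<omega>)\<^sup>2)"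
    and \<beta>_not_summable: "AE \<omega> in M. \<not> summable (\<lambda>k. \<beta> k \<omega>)"
  shows "AE \<omega> in M. running_avg (\<lambda>k. \<beta> k \<omega>) (\<lambda>k. d k \<omega>) \<longlonglongrightarrow> 0"
proof -
  have "AE \<omega> in M. summable (\<lambda>k. \<beta> k \<omega> * d k \<omega>)"
    using var_bound \<beta>_measurable \<beta>_range \<beta>_square_summable by (rule weighted_summable_AE)
  with \<beta>_range \<beta>_not_summable show ?thesis
    by eventually_elim (intro running_avg_tendsto_zero_of_summable, auto)
qed

lemma variance_le_of_bounded:
  assumes "\<And>k \<omega>. \<bar>d k \<omega>\<bar> \<le> B" and "\<eta> \<in> borel_measurable (G k)" "\<And>\<omega>. 0 \<le> \<eta> \<omega>" "\<And>\<omega>. \<eta> \<omega> \<le> 1"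
  shows "(\<integral>\<omega>. \<eta> \<omega> * (d k \<omega>)\<^sup>2 \<partial>M) \<le> B\<^sup>2 * (\<integral>\<omega>. \<eta> \<omega> \<partial>M)"
proof -
  have [measurable]: "\<eta> \<in> borel_measurable M"
    by (rule measurable_G_M[OF assms(2)])
  have d_le: "(d k \<omega>)\<^sup>2 \<le> B\<^sup>2" for \<omega>
    using assms(1)[of k \<omega>] abs_le_square_iff[of "d k \<omega>" B] by force
  have "\<eta> \<omega> * (d k \<omega>)\<^sup>2 \<le> B\<^sup>2" "\<eta> \<omega> * B\<^sup>2 \<le> B\<^sup>2" for \<omega>
    using mult_left_le_one_le[of "(d k \<omega>)\<^sup>2" "\<eta> \<omega>"] mult_left_le_one_le[of "B\<^sup>2" "\<eta> \<omega>"]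
      assms(3,4) d_le[of \<omega>] by auto
  then have "(\<integral>\<omega>. \<eta> \<omega> * (d k \<omega>)\<^sup>2 \<partial>M) \<le> (\<integral>\<omega>. \<eta> \<omega> * B\<^sup>2 \<partial>M)"
    using assms(3) d_le by (intro integral_mono integrable_const_bound[where B = "B\<^sup>2"] AE_I2)
      (auto intro: mult_left_mono)
  then show ?thesis
    by (simp add: mult.commute)
qed

end

section \<open>Sampling from the Markov decision process\<close>

locale sampled_mdp = prob_space M + filtration "space M" F
  for M :: "'w measure" and F :: "nat \<Rightarrow> 'w measure" +
  fixes Kr :: "'s::finite \<Rightarrow> 'a::finite \<Rightarrow> (real \<times> 's) measure"
    and S :: "nat \<Rightarrow> 'w \<Rightarrow> 's" and A :: "nat \<Rightarrow> 'w \<Rightarrow> 'a" and Rw :: "nat \<Rightarrow> 'w \<Rightarrow> real"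
  assumes subalgebra: "\<And>t. subalgebra M (F t)"
    and Kr_prob: "\<And>s a. prob_space (Kr s a)"
    and Kr_sets: "\<And>s a. sets (Kr s a) = sets (borel \<Otimes>\<^sub>M count_space UNIV)"
    and Kr_var: "\<And>s a. integrable (Kr s a) (\<lambda>x. (fst x)\<^sup>2)"
    and S_meas: "\<And>t. S t \<in> measurable (F t) (count_space UNIV)"
    and A_meas: "\<And>t. A t \<in> measurable (F t) (count_space UNIV)"
    and R_meas: "\<And>t. Rw t \<in> borel_measurable (F (Suc t))"
    and sample_law: "\<And>t E B. E \<in> sets (F t) \<Longrightarrow> B \<in> sets (borel \<Otimes>\<^sub>M count_space UNIV) \<Longrightarrow>
        measure M (E \<inter> {\<omega> \<in> space M. (Rw t \<omega>, S (Suc t) \<omega>) \<in> B})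
          = (\<integral>\<omega>. indicator E \<omega> * measure (Kr (S t \<omega>) (A t \<omega>)) B \<partial>M)"
begin

abbreviation outcomes :: "(real \<times> 's) measure" where
  "outcomes \<equiv> borel \<Otimes>\<^sub>M count_space UNIV"

definition outcome :: "nat \<Rightarrow> 'w \<Rightarrow> real \<times> 's" where
  "outcome t \<omega> = (Rw t \<omega>, S (Suc t) \<omega>)"

lemma sets_F_M: "E \<in> sets (F t) \<Longrightarrow> E \<in> sets M"
  using subalgebra[of t] by (auto simp: subalgebra_def)

lemma measurable_F_M: "f \<in> measurable (F t) N \<Longrightarrow> f \<in> measurable M N"
  by (rule measurable_from_subalg[OF subalgebra])

lemma measurable_F_mono: "f \<in> measurable (F i) N \<Longrightarrow> i \<le> j \<Longrightarrow> f \<in> measurable (F j) N"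
  by (rule measurable_from_subalg[of _ "F i"]) (auto simp: subalgebra_def space_F sets_F_mono)

lemma outcome_measurable: "outcome t \<in> measurable (F (Suc t)) outcomes"
  unfolding outcome_def using R_meas[of t] S_meas[of "Suc t"] by measurable

lemma measurable_state_action: "(\<lambda>\<omega>. h (S t \<omega>) (A t \<omega>) :: real) \<in> borel_measurable (F t)"
proof (rule measurable_compose_countable'[where g = "S t" and I = UNIV])
  fix s
  show "(\<lambda>\<omega>. h s (A t \<omega>)) \<in> borel_measurable (F t)"
    by (rule measurable_compose[OF A_meas]) simp
qed (use S_meas in auto)

lemma measurable_state_action_outcome:
  fixes g :: "'s \<Rightarrow> 'a \<Rightarrow> real \<times> 's \<Rightarrow> real"
  assumes "\<And>s a. g s a \<in> borel_measurable outcomes"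
  shows "(\<lambda>\<omega>. g (S t \<omega>) (A t \<omega>) (outcome t \<omega>)) \<in> borel_measurable (F (Suc t))"
proof (rule measurable_compose_countable'[where g = "S t" and I = UNIV])
  fix s
  show "(\<lambda>\<omega>. g s (A t \<omega>) (outcome t \<omega>)) \<in> borel_measurable (F (Suc t))"
  proof (rule measurable_compose_countable'[where g = "A t" and I = UNIV])
    fix a
    show "(\<lambda>\<omega>. g s a (outcome t \<omega>)) \<in> borel_measurable (F (Suc t))"
      using assms[of s a] outcome_measurable by measurable
  qed (use measurable_F_mono[OF A_meas] in auto)
qed (use measurable_F_mono[OF S_meas] in auto)

lemma measurable_outcomes_Kr: "f \<in> borel_measurable outcomes \<Longrightarrow> f \<in> borel_measurable (Kr s a)"
  using Kr_sets[of s a] by (simp cong: measurable_cong_sets)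

lemma distr_outcome_on_event:
  assumes E: "E \<in> sets (F t)" and E_sa: "E \<subseteq> {\<omega>\<in>space M. S t \<omega> = s \<and> A t \<omega> = a}"
  shows "distr (density M (\<lambda>\<omega>. ennreal (indicator E \<omega>))) outcomes (outcome t) = density (Kr s a) (\<lambda>_. measure M E)"
proof (rule measure_eqI)
  show "sets (distr (density M (\<lambda>\<omega>. ennreal (indicator E \<omega>))) outcomes (outcome t)) = sets (density (Kr s a) (\<lambda>_. measure M E))"
    using Kr_sets[of s a] by simp
  interpret K: prob_space "Kr s a"
    by (rule Kr_prob)
  fix B
  assume "B \<in> sets (distr (density M (\<lambda>\<omega>. ennreal (indicator E \<omega>))) outcomes (outcome t))"
  then have B: "B \<in> sets outcomes"
    by simp
  have EM: "E \<in> sets M"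
    by (rule sets_F_M[OF E])
  have XB: "outcome t -` B \<inter> space M \<in> sets M"
    using measurable_F_M[OF outcome_measurable] B by (rule measurable_sets)
  have "emeasure (distr (density M (\<lambda>\<omega>. ennreal (indicator E \<omega>))) outcomes (outcome t)) B
      = emeasure (density M (\<lambda>\<omega>. ennreal (indicator E \<omega>))) (outcome t -` B \<inter> space M)"
    using measurable_F_M[OF outcome_measurable] B by (subst emeasure_distr) auto
  also have "\<dots> = (\<integral>\<^sup>+ \<omega>. ennreal (indicator E \<omega>) * indicator (outcome t -` B \<inter> space M) \<omega> \<partial>M)"
    using EM XB by (subst emeasure_density) auto
  also have "\<dots> = (\<integral>\<^sup>+ \<omega>. indicator (E \<inter> (outcome t -` B \<inter> space M)) \<omega> \<partial>M)"
    by (intro nn_integral_cong) (auto simp: indicator_def)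
  also have "\<dots> = emeasure M (E \<inter> (outcome t -` B \<inter> space M))"
    using EM XB by (intro nn_integral_indicator) auto
  also have "\<dots> = ennreal (\<integral>\<omega>. indicator E \<omega> * measure (Kr (S t \<omega>) (A t \<omega>)) B \<partial>M)"
    using sample_law[OF E B] by (simp add: emeasure_eq_measure outcome_def Int_def conj_commute)
  also have "\<dots> = ennreal (measure M E * measure (Kr s a) B)"
  proof -
    have "(\<integral>\<omega>. indicator E \<omega> * measure (Kr (S t \<omega>) (A t \<omega>)) B \<partial>M)
        = (\<integral>\<omega>. indicator E \<omega> * measure (Kr s a) B \<partial>M)"
      using E_sa by (intro Bochner_Integration.integral_cong) (auto simp: indicator_def)
    then show ?thesis
      using EM by simp
  qed
  also have "\<dots> = emeasure (density (Kr s a) (\<lambda>_. measure M E)) B"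
    using B Kr_sets[of s a]
    by (simp add: emeasure_density nn_integral_cmult_indicator K.emeasure_eq_measure ennreal_mult)
  finally show "emeasure (distr (density M (\<lambda>\<omega>. ennreal (indicator E \<omega>))) outcomes (outcome t)) B
      = emeasure (density (Kr s a) (\<lambda>_. measure M E)) B" .
qed

lemma integral_outcome_on_event:
  assumes E: "E \<in> sets (F t)" and E_sa: "E \<subseteq> {\<omega>\<in>space M. S t \<omega> = s \<and> A t \<omega> = a}"
    and g: "g \<in> borel_measurable outcomes" "integrable (Kr s a) g"
  shows "integrable M (\<lambda>\<omega>. indicator E \<omega> * g (outcome t \<omega>))"
    and "(\<integral>\<omega>. indicator E \<omega> * g (outcome t \<omega>) \<partial>M) = measure M E * (\<integral>x. g x \<partial>Kr s a)"
proof -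
  define D where "D = density M (\<lambda>\<omega>. ennreal (indicator E \<omega>))"
  have EM: "E \<in> sets M"
    by (rule sets_F_M[OF E])
  have distr_D: "distr D outcomes (outcome t) = density (Kr s a) (\<lambda>_. measure M E)"
    unfolding D_def by (rule distr_outcome_on_event[OF E E_sa])
  have outcome_D: "outcome t \<in> measurable D outcomes"
    unfolding D_def using measurable_F_M[OF outcome_measurable] by simp
  have gK: "g \<in> borel_measurable (Kr s a)"
    by (rule measurable_outcomes_Kr[OF g(1)])
  have gX: "(\<lambda>\<omega>. g (outcome t \<omega>)) \<in> borel_measurable M"
    using g(1) measurable_F_M[OF outcome_measurable] by measurable
  have "integrable (density (Kr s a) (\<lambda>_. measure M E)) g"
    using g(2) gK by (subst integrable_density) auto
  then have "integrable D (\<lambda>\<omega>. g (outcome t \<omega>))"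
    using outcome_D g(1) by (simp add: distr_D[symmetric] integrable_distr_eq)
  then show "integrable M (\<lambda>\<omega>. indicator E \<omega> * g (outcome t \<omega>))"
    unfolding D_def using EM gX by (subst (asm) integrable_density) auto
  have "(\<integral>\<omega>. indicator E \<omega> * g (outcome t \<omega>) \<partial>M) = (\<integral>\<omega>. g (outcome t \<omega>) \<partial>D)"
    unfolding D_def using EM gX by (subst integral_density) auto
  also have "\<dots> = (\<integral>x. g x \<partial>density (Kr s a) (\<lambda>_. measure M E))"
    using outcome_D g(1) by (simp add: integral_distr distr_D[symmetric])
  also have "\<dots> = measure M E * (\<integral>x. g x \<partial>Kr s a)"
    using gK by (subst integral_density) auto
  finally show "(\<integral>\<omega>. indicator E \<omega> * g (outcome t \<omega>) \<partial>M) = measure M E * (\<integral>x. g x \<partial>Kr s a)" .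
qed

lemma indicator_mult_state_action_split:
  fixes h :: "'s \<Rightarrow> 'a \<Rightarrow> real"
  assumes "\<omega> \<in> space M"
  shows "indicator E \<omega> * h (S t \<omega>) (A t \<omega>)
    = (\<Sum>s\<in>UNIV. \<Sum>a\<in>UNIV. indicator (E \<inter> {\<omega>\<in>space M. S t \<omega> = s \<and> A t \<omega> = a}) \<omega> * h s a)"
proof -
  have "(\<Sum>s\<in>UNIV. \<Sum>a\<in>UNIV. indicator (E \<inter> {\<omega>\<in>space M. S t \<omega> = s \<and> A t \<omega> = a}) \<omega> * h s a)
      = (\<Sum>s\<in>UNIV. if s = S t \<omega> then (\<Sum>a\<in>UNIV. if a = A t \<omega> then indicator E \<omega> * h s a else 0) else 0)"
    using assms by (intro sum.cong refl) (auto simp: indicator_def)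
  also have "\<dots> = indicator E \<omega> * h (S t \<omega>) (A t \<omega>)"
    by simp
  finally show ?thesis ..
qed

lemma sets_state_action_event:
  assumes "E \<in> sets (F t)"
  shows "E \<inter> {\<omega>\<in>space M. S t \<omega> = s \<and> A t \<omega> = a} \<in> sets (F t)"
proof -
  have [measurable]: "S t \<in> measurable (F t) (count_space UNIV)" "A t \<in> measurable (F t) (count_space UNIV)"
    using S_meas A_meas by auto
  have "{\<omega>\<in>space (F t). S t \<omega> = s \<and> A t \<omega> = a} \<in> sets (F t)"
    by measurable
  with assms show ?thesis
    by (simp add: space_F)
qed

lemma integral_outcome:
  fixes g :: "'s \<Rightarrow> 'a \<Rightarrow> real \<times> 's \<Rightarrow> real"
  assumes E: "E \<in> sets (F t)"
    and g: "\<And>s a. g s a \<in> borel_measurable outcomes" "\<And>s a. integrable (Kr s a) (g s a)"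
  shows "integrable M (\<lambda>\<omega>. indicator E \<omega> * g (S t \<omega>) (A t \<omega>) (outcome t \<omega>))"
    and "(\<integral>\<omega>. indicator E \<omega> * g (S t \<omega>) (A t \<omega>) (outcome t \<omega>) \<partial>M)
       = (\<integral>\<omega>. indicator E \<omega> * (\<integral>x. g (S t \<omega>) (A t \<omega>) x \<partial>Kr (S t \<omega>) (A t \<omega>)) \<partial>M)"
proof -
  define E' where "E' s a = E \<inter> {\<omega>\<in>space M. S t \<omega> = s \<and> A t \<omega> = a}" for s a
  have E'_F: "E' s a \<in> sets (F t)" for s a
    unfolding E'_def using E by (rule sets_state_action_event)
  have E'_M: "E' s a \<in> sets M" for s a
    by (rule sets_F_M[OF E'_F])
  have E'_sa: "E' s a \<subseteq> {\<omega>\<in>space M. S t \<omega> = s \<and> A t \<omega> = a}" for s a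
    by (auto simp: E'_def)
  note on_E' = integral_outcome_on_event[OF E'_F E'_sa g]
  have lhs: "indicator E \<omega> * g (S t \<omega>) (A t \<omega>) (outcome t \<omega>)
      = (\<Sum>s\<in>UNIV. \<Sum>a\<in>UNIV. indicator (E' s a) \<omega> * g s a (outcome t \<omega>))" if "\<omega> \<in> space M" for \<omega>
    using indicator_mult_state_action_split[OF that, where E = E and t = t and h = "\<lambda>s a. g s a (outcome t \<omega>)"]
    by (simp add: E'_def)
  have rhs: "indicator E \<omega> * (\<integral>x. g (S t \<omega>) (A t \<omega>) x \<partial>Kr (S t \<omega>) (A t \<omega>))
      = (\<Sum>s\<in>UNIV. \<Sum>a\<in>UNIV. indicator (E' s a) \<omega> * (\<integral>x. g s a x \<partial>Kr s a))" if "\<omega> \<in> space M" for \<omega>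
    using indicator_mult_state_action_split[OF that, where E = E and t = t and h = "\<lambda>s a. \<integral>x. g s a x \<partial>Kr s a"]
    by (simp add: E'_def)
  have "integrable M (\<lambda>\<omega>. \<Sum>s\<in>UNIV. \<Sum>a\<in>UNIV. indicator (E' s a) \<omega> * g s a (outcome t \<omega>))"
    by (intro Bochner_Integration.integrable_sum on_E'(1))
  then show "integrable M (\<lambda>\<omega>. indicator E \<omega> * g (S t \<omega>) (A t \<omega>) (outcome t \<omega>))"
    by (rule Bochner_Integration.integrable_cong[THEN iffD1, rotated -1]) (auto simp: lhs)
  have integrable_E': "integrable M (\<lambda>\<omega>. indicator (E' s a) \<omega> * c)" for s a and c :: real
    using E'_M by (intro integrable_mult_left integrable_real_indicator) (auto simp: less_top[symmetric])
  have integral_double_sum: "(\<integral>\<omega>. (\<Sum>s\<in>UNIV. \<Sum>a\<in>UNIV. f s a \<omega>) \<partial>M) = (\<Sum>s\<in>UNIV. \<Sum>a\<in>UNIV. \<integral>\<omega>. f s a \<omega> \<partial>M)"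
    if "\<And>s a. integrable M (f s a)" for f :: "'s \<Rightarrow> 'a \<Rightarrow> 'w \<Rightarrow> real"
    using that by simp
  have "(\<integral>\<omega>. indicator E \<omega> * g (S t \<omega>) (A t \<omega>) (outcome t \<omega>) \<partial>M)
      = (\<integral>\<omega>. (\<Sum>s\<in>UNIV. \<Sum>a\<in>UNIV. indicator (E' s a) \<omega> * g s a (outcome t \<omega>)) \<partial>M)"
    by (rule Bochner_Integration.integral_cong[OF refl lhs])
  also have "\<dots> = (\<Sum>s\<in>UNIV. \<Sum>a\<in>UNIV. \<integral>\<omega>. indicator (E' s a) \<omega> * g s a (outcome t \<omega>) \<partial>M)"
    by (rule integral_double_sum[OF on_E'(1)])
  also have "\<dots> = (\<Sum>s\<in>UNIV. \<Sum>a\<in>UNIV. \<integral>\<omega>. indicator (E' s a) \<omega> * (\<integral>x. g s a x \<partial>Kr s a) \<partial>M)"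
    using E'_M by (simp add: on_E'(2))
  also have "\<dots> = (\<integral>\<omega>. (\<Sum>s\<in>UNIV. \<Sum>a\<in>UNIV. indicator (E' s a) \<omega> * (\<integral>x. g s a x \<partial>Kr s a)) \<partial>M)"
    by (rule integral_double_sum[OF integrable_E', symmetric])
  also have "\<dots> = (\<integral>\<omega>. indicator E \<omega> * (\<integral>x. g (S t \<omega>) (A t \<omega>) x \<partial>Kr (S t \<omega>) (A t \<omega>)) \<partial>M)"
    by (rule Bochner_Integration.integral_cong[OF refl rhs, symmetric])
  finally show "(\<integral>\<omega>. indicator E \<omega> * g (S t \<omega>) (A t \<omega>) (outcome t \<omega>) \<partial>M)
       = (\<integral>\<omega>. indicator E \<omega> * (\<integral>x. g (S t \<omega>) (A t \<omega>) x \<partial>Kr (S t \<omega>) (A t \<omega>)) \<partial>M)" .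
qed

lemma integrable_state_action_outcome:
  fixes g :: "'s \<Rightarrow> 'a \<Rightarrow> real \<times> 's \<Rightarrow> real"
  assumes "\<And>s a. g s a \<in> borel_measurable outcomes" "\<And>s a. integrable (Kr s a) (g s a)"
  shows "integrable M (\<lambda>\<omega>. g (S t \<omega>) (A t \<omega>) (outcome t \<omega>))"
proof -
  have "space M \<in> sets (F t)"
    using sets.top[of "F t"] by (simp add: space_F)
  from integral_outcome(1)[OF this assms] show ?thesis
    by (rule Bochner_Integration.integrable_cong[THEN iffD1, rotated -1]) auto
qed

lemma integral_mult_state_action_outcome:
  fixes g :: "'s \<Rightarrow> 'a \<Rightarrow> real \<times> 's \<Rightarrow> real"
  assumes g: "\<And>s a. g s a \<in> borel_measurable outcomes" "\<And>s a. integrable (Kr s a) (g s a)"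
    and \<eta>: "\<eta> \<in> borel_measurable (F t)"
    and integrable: "integrable M (\<lambda>\<omega>. \<eta> \<omega> * g (S t \<omega>) (A t \<omega>) (outcome t \<omega>))"
  shows "(\<integral>\<omega>. \<eta> \<omega> * g (S t \<omega>) (A t \<omega>) (outcome t \<omega>) \<partial>M)
    = (\<integral>\<omega>. \<eta> \<omega> * (\<integral>x. g (S t \<omega>) (A t \<omega>) x \<partial>Kr (S t \<omega>) (A t \<omega>)) \<partial>M)"
proof -
  interpret Ft: finite_measure_subalgebra M "F t"
    using subalgebra[of t] finite_measure_axioms
    by (simp add: finite_measure_subalgebra_def finite_measure_subalgebra_axioms_def)
  define u where "u \<omega> = g (S t \<omega>) (A t \<omega>) (outcome t \<omega>)" for \<omega>
  define mean where "mean \<omega> = (\<integral>x. g (S t \<omega>) (A t \<omega>) x \<partial>Kr (S t \<omega>) (A t \<omega>))" for \<omega>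
  have u_measurable: "u \<in> borel_measurable M"
    unfolding u_def by (rule measurable_F_M[OF measurable_state_action_outcome[OF g(1)]])
  have mean_measurable: "mean \<in> borel_measurable (F t)"
    unfolding mean_def by (rule measurable_state_action)
  have "\<bar>mean \<omega>\<bar> \<le> (\<Sum>s\<in>UNIV. \<Sum>a\<in>UNIV. \<bar>\<integral>x. g s a x \<partial>Kr s a\<bar>)" for \<omega>
    unfolding mean_def by (rule abs_le_sum_abs_table[of "\<lambda>s a. \<integral>x. g s a x \<partial>Kr s a"])
  then have "integrable M mean"
    using measurable_F_M[OF mean_measurable] by (intro integrable_const_bound) auto
  then have "AE \<omega> in M. real_cond_exp M (F t) u \<omega> = mean \<omega>"
  proof (intro Ft.real_cond_exp_charact)
    fix E
    assume "E \<in> sets (F t)"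
    from integral_outcome(2)[OF this g] show "(\<integral>\<omega>\<in>E. u \<omega> \<partial>M) = (\<integral>\<omega>\<in>E. mean \<omega> \<partial>M)"
      by (simp add: set_lebesgue_integral_def u_def mean_def)
  qed (use integrable_state_action_outcome[OF g] mean_measurable in \<open>auto simp: u_def[abs_def]\<close>)
  moreover have [measurable]: "\<eta> \<in> borel_measurable M" "mean \<in> borel_measurable M"
    "real_cond_exp M (F t) u \<in> borel_measurable M"
    using measurable_F_M[OF \<eta>] measurable_F_M[OF mean_measurable] borel_measurable_cond_exp2 by auto
  ultimately have "(\<integral>\<omega>. \<eta> \<omega> * real_cond_exp M (F t) u \<omega> \<partial>M) = (\<integral>\<omega>. \<eta> \<omega> * mean \<omega> \<partial>M)"
    by (intro integral_cong_AE) auto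
  moreover have "(\<integral>\<omega>. \<eta> \<omega> * real_cond_exp M (F t) u \<omega> \<partial>M) = (\<integral>\<omega>. \<eta> \<omega> * u \<omega> \<partial>M)"
    using integrable \<eta> u_measurable unfolding u_def by (intro Ft.real_cond_exp_intg(2))
  ultimately show ?thesis
    by (simp add: u_def mean_def)
qed

lemma integral_mult_state_action_outcome_le:
  fixes g :: "'s \<Rightarrow> 'a \<Rightarrow> real \<times> 's \<Rightarrow> real"
  assumes g: "\<And>s a. g s a \<in> borel_measurable outcomes" "\<And>s a. integrable (Kr s a) (g s a)"
    and g_nonneg: "\<And>s a x. 0 \<le> g s a x"
    and \<eta>: "\<eta> \<in> borel_measurable (F t)" "\<And>\<omega>. 0 \<le> \<eta> \<omega>" "\<And>\<omega>. \<eta> \<omega> \<le> 1"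
  shows "(\<integral>\<omega>. \<eta> \<omega> * g (S t \<omega>) (A t \<omega>) (outcome t \<omega>) \<partial>M)
    \<le> (\<Sum>s\<in>UNIV. \<Sum>a\<in>UNIV. \<integral>x. g s a x \<partial>Kr s a) * (\<integral>\<omega>. \<eta> \<omega> \<partial>M)"
proof -
  define C where "C = (\<Sum>s\<in>UNIV. \<Sum>a\<in>UNIV. \<integral>x. g s a x \<partial>Kr s a)"
  have mean_le: "(\<integral>x. g s a x \<partial>Kr s a) \<le> C" for s a
    using abs_le_sum_abs_table[of "\<lambda>s a. \<integral>x. g s a x \<partial>Kr s a" s a] g_nonneg
    by (simp add: C_def integral_nonneg_AE)
  have [measurable]: "\<eta> \<in> borel_measurable M"
    by (rule measurable_F_M[OF \<eta>(1)])
  have "integrable M (\<lambda>\<omega>. \<eta> \<omega> * g (S t \<omega>) (A t \<omega>) (outcome t \<omega>))"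
  proof (rule Bochner_Integration.integrable_bound[OF integrable_state_action_outcome[OF g, of t]])
    show "(\<lambda>\<omega>. \<eta> \<omega> * g (S t \<omega>) (A t \<omega>) (outcome t \<omega>)) \<in> borel_measurable M"
      using measurable_F_M[OF measurable_state_action_outcome[OF g(1)]] by measurable
    show "AE \<omega> in M. norm (\<eta> \<omega> * g (S t \<omega>) (A t \<omega>) (outcome t \<omega>)) \<le> norm (g (S t \<omega>) (A t \<omega>) (outcome t \<omega>))"
      using \<eta>(2,3) by (auto simp: abs_mult intro!: mult_left_le_one_le)
  qed
  then have "(\<integral>\<omega>. \<eta> \<omega> * g (S t \<omega>) (A t \<omega>) (outcome t \<omega>) \<partial>M)
      = (\<integral>\<omega>. \<eta> \<omega> * (\<integral>x. g (S t \<omega>) (A t \<omega>) x \<partial>Kr (S t \<omega>) (A t \<omega>)) \<partial>M)"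
    by (rule integral_mult_state_action_outcome[OF g \<eta>(1)])
  also have "\<dots> \<le> (\<integral>\<omega>. \<eta> \<omega> * C \<partial>M)"
  proof (rule integral_mono)
    have "integrable M \<eta>"
      using \<eta>(2,3) by (intro integrable_const_bound[where B = 1]) auto
    then show "integrable M (\<lambda>\<omega>. \<eta> \<omega> * C)"
      by simp
    have "(\<lambda>\<omega>. \<integral>x. g (S t \<omega>) (A t \<omega>) x \<partial>Kr (S t \<omega>) (A t \<omega>)) \<in> borel_measurable M"
      by (rule measurable_F_M[OF measurable_state_action])
    then show "integrable M (\<lambda>\<omega>. \<eta> \<omega> * (\<integral>x. g (S t \<omega>) (A t \<omega>) x \<partial>Kr (S t \<omega>) (A t \<omega>)))"
    proof (intro integrable_const_bound[where B = C] AE_I2)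
      fix \<omega>
      have "0 \<le> (\<integral>x. g (S t \<omega>) (A t \<omega>) x \<partial>Kr (S t \<omega>) (A t \<omega>))"
        using g_nonneg by (intro integral_nonneg_AE) auto
      then show "norm (\<eta> \<omega> * (\<integral>x. g (S t \<omega>) (A t \<omega>) x \<partial>Kr (S t \<omega>) (A t \<omega>))) \<le> C"
        using \<eta>(2,3)[of \<omega>] mean_le[of "S t \<omega>" "A t \<omega>"]
        by (simp add: abs_mult) (meson mult_left_le_one_le order_trans)
    qed simp
    show "\<eta> \<omega> * (\<integral>x. g (S t \<omega>) (A t \<omega>) x \<partial>Kr (S t \<omega>) (A t \<omega>)) \<le> \<eta> \<omega> * C" for \<omega>
      using \<eta>(2) mean_le by (intro mult_left_mono)
  qed
  finally show ?thesis
    by (simp add: C_def mult.commute)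
qed

lemma L2_martingale_diff_state_action_outcome:
  fixes g :: "'s \<Rightarrow> 'a \<Rightarrow> real \<times> 's \<Rightarrow> real"
  assumes g: "\<And>s a. g s a \<in> borel_measurable outcomes"
    and g_square_integrable: "\<And>s a. integrable (Kr s a) (\<lambda>x. (g s a x)\<^sup>2)"
    and g_centred: "\<And>s a. (\<integral>x. g s a x \<partial>Kr s a) = 0"
  shows "L2_martingale_diff M F (\<lambda>t \<omega>. g (S t \<omega>) (A t \<omega>) (outcome t \<omega>))"
proof (rule L2_martingale_diff.intro[OF prob_space_axioms filtration_axioms], unfold_locales)
  have g_integrable: "integrable (Kr s a) (g s a)" for s a
    using finite_measure.square_integrable_imp_integrable[OF prob_space.finite_measure[OF Kr_prob] measurable_outcomes_Kr[OF g]
        g_square_integrable] .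
  fix t
  show "subalgebra M (F t)"
    by (rule subalgebra)
  show measurable: "(\<lambda>\<omega>. g (S t \<omega>) (A t \<omega>) (outcome t \<omega>)) \<in> borel_measurable (F (Suc t))"
    by (rule measurable_state_action_outcome[OF g])
  show square_integrable: "integrable M (\<lambda>\<omega>. (g (S t \<omega>) (A t \<omega>) (outcome t \<omega>))\<^sup>2)"
    using g by (intro integrable_state_action_outcome[where g = "\<lambda>s a x. (g s a x)\<^sup>2"]
        g_square_integrable) measurable
  fix \<eta> :: "'w \<Rightarrow> real"
  assume \<eta>: "\<eta> \<in> borel_measurable (F t)" "integrable M (\<lambda>\<omega>. (\<eta> \<omega>)\<^sup>2)"
  have "integrable M (\<lambda>\<omega>. \<eta> \<omega> * g (S t \<omega>) (A t \<omega>) (outcome t \<omega>))"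
    using \<eta>(2) square_integrable measurable_F_M[OF \<eta>(1)] measurable_F_M[OF measurable]
    by (rule integrable_mult_square_integrable)
  from integral_mult_state_action_outcome[OF g g_integrable \<eta>(1) this]
  show "(\<integral>\<omega>. \<eta> \<omega> * g (S t \<omega>) (A t \<omega>) (outcome t \<omega>) \<partial>M) = 0"
    by (simp add: g_centred)
qed

lemma integrable_fst_Kr: "integrable (Kr s a) fst"
proof -
  have "fst \<in> borel_measurable outcomes"
    by measurable
  then show ?thesis
    using finite_measure.square_integrable_imp_integrable[OF prob_space.finite_measure[OF Kr_prob] measurable_outcomes_Kr] Kr_var
    by blast
qed

lemma reward_noise_L2_martingale_diff:
  "L2_martingale_diff M F (\<lambda>t \<omega>. Rw t \<omega> - exp_reward Kr (S t \<omega>) (A t \<omega>))"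
proof -
  have "integrable (Kr s a) (\<lambda>x. (fst x - exp_reward Kr s a)\<^sup>2)" for s a
  proof -
    interpret K: prob_space "Kr s a"
      by (rule Kr_prob)
    show ?thesis
      using integrable_fst_Kr Kr_var by (simp add: power2_diff)
  qed
  moreover have "(\<integral>x. fst x - exp_reward Kr s a \<partial>Kr s a) = 0" for s a
  proof -
    interpret K: prob_space "Kr s a"
      by (rule Kr_prob)
    show ?thesis
      using integrable_fst_Kr by (simp add: exp_reward_def K.prob_space)
  qed
  ultimately show ?thesis
    using L2_martingale_diff_state_action_outcome[where g = "\<lambda>s a x. fst x - exp_reward Kr s a"]
    by (simp add: outcome_def)
qed

lemma reward_noise_variance_le:
  assumes "\<eta> \<in> borel_measurable (F t)" "\<And>\<omega>. 0 \<le> \<eta> \<omega>" "\<And>\<omega>. \<eta> \<omega> \<le> 1"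
  shows "(\<integral>\<omega>. \<eta> \<omega> * (Rw t \<omega> - exp_reward Kr (S t \<omega>) (A t \<omega>))\<^sup>2 \<partial>M)
    \<le> (\<Sum>s\<in>UNIV. \<Sum>a\<in>UNIV. \<integral>x. (fst x - exp_reward Kr s a)\<^sup>2 \<partial>Kr s a) * (\<integral>\<omega>. \<eta> \<omega> \<partial>M)"
proof -
  have "integrable (Kr s a) (\<lambda>x. (fst x - exp_reward Kr s a)\<^sup>2)" for s a
  proof -
    interpret K: prob_space "Kr s a"
      by (rule Kr_prob)
    show ?thesis
      using integrable_fst_Kr Kr_var by (simp add: power2_diff)
  qed
  from integral_mult_state_action_outcome_le[where g = "\<lambda>s a x. (fst x - exp_reward Kr s a)\<^sup>2", OF _ this _ assms]
  show ?thesis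
    by (simp add: outcome_def)
qed

lemma trans_prob_nonneg: "0 \<le> trans_prob Kr s a s'"
  by (simp add: trans_prob_def)

lemma sets_Kr_next_state: "UNIV \<times> {s'} \<in> sets (Kr s a)"
  using Kr_sets[of s a] by simp

lemma sum_trans_prob: "(\<Sum>s'\<in>UNIV. trans_prob Kr s a s') = 1"
proof -
  interpret K: prob_space "Kr s a"
    by (rule Kr_prob)
  have "(\<Sum>s'\<in>UNIV. trans_prob Kr s a s') = measure (Kr s a) (\<Union>s'. UNIV \<times> {s'})"
    unfolding trans_prob_def
    by (rule measure_finite_Union[symmetric]) (auto simp: sets_Kr_next_state disjoint_family_on_def)
  also have "(\<Union>s'. UNIV \<times> {s'}) = space (Kr s a)"
    using sets_eq_imp_space_eq[OF Kr_sets[of s a]] by (auto simp: space_pair_measure)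
  finally show ?thesis
    by (simp add: K.prob_space)
qed

lemma next_state_indicator_L2_martingale_diff:
  "L2_martingale_diff M F (\<lambda>t \<omega>. indicator {s'} (S (Suc t) \<omega>) - trans_prob Kr (S t \<omega>) (A t \<omega>) s')"
proof -
  define g where "g s a x = indicator {s'} (snd x) - trans_prob Kr s a s'" for s a and x :: "real \<times> 's"
  have g_measurable: "g s a \<in> borel_measurable outcomes" for s a
    unfolding g_def by measurable
  have "integrable (Kr s a) (\<lambda>x. (g s a x)\<^sup>2)" for s a
  proof (rule finite_measure.integrable_const_bound[OF prob_space.finite_measure[OF Kr_prob], where B = 1])
    show "(\<lambda>x. (g s a x)\<^sup>2) \<in> borel_measurable (Kr s a)"
      using measurable_outcomes_Kr[OF g_measurable] by measurable
    show "AE x in Kr s a. norm ((g s a x)\<^sup>2) \<le> 1"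
      using prob_space.prob_le_1[OF Kr_prob, of s a] trans_prob_nonneg[of s a s']
      by (auto simp: g_def indicator_def trans_prob_def abs_square_le_1)
  qed
  moreover have "(\<integral>x. g s a x \<partial>Kr s a) = 0" for s a
  proof -
    interpret K: prob_space "Kr s a"
      by (rule Kr_prob)
    have indicator_snd: "(\<lambda>x. indicator {s'} (snd x) :: real) = indicator (UNIV \<times> {s'})"
      by (auto simp: indicator_def)
    have "integrable (Kr s a) (\<lambda>x. indicator {s'} (snd x) :: real)"
      using sets_Kr_next_state[of s' s a] by (simp add: indicator_snd less_top[symmetric])
    moreover have "(\<integral>x. indicator {s'} (snd x) \<partial>Kr s a) = trans_prob Kr s a s'"
      using sets_Kr_next_state[of s' s a] by (simp add: indicator_snd trans_prob_def)
    ultimately show ?thesis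
      unfolding g_def by (subst Bochner_Integration.integral_diff) (auto simp: K.prob_space)
  qed
  ultimately have "L2_martingale_diff M F (\<lambda>t \<omega>. g (S t \<omega>) (A t \<omega>) (outcome t \<omega>))"
    by (intro L2_martingale_diff_state_action_outcome g_measurable)
  then show ?thesis
    by (simp add: g_def outcome_def)
qed

lemma abs_transition_noise_le:
  assumes "\<And>s'. \<bar>c s'\<bar> \<le> B"
  shows "\<bar>c s'' - (\<Sum>s'\<in>UNIV. trans_prob Kr s a s' * c s')\<bar> \<le> 2 * B"
  using assms[of s''] abs_stochastic_sum_le[of "trans_prob Kr s a" c B, OF trans_prob_nonneg sum_trans_prob assms]
  by linarith

lemma transition_noise_L2_martingale_diff:
  assumes c_measurable: "\<And>t s'. c t s' \<in> borel_measurable (F t)"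
    and c_bounded: "\<And>t s' \<omega>. \<bar>c t s' \<omega>\<bar> \<le> B"
  shows "L2_martingale_diff M F
    (\<lambda>t \<omega>. c t (S (Suc t) \<omega>) \<omega> - (\<Sum>s'\<in>UNIV. trans_prob Kr (S t \<omega>) (A t \<omega>) s' * c t s' \<omega>))"
proof -
  define e where "e s' t \<omega> = indicator {s'} (S (Suc t) \<omega>) - trans_prob Kr (S t \<omega>) (A t \<omega>) s'"
    for s' t \<omega>
  interpret E: L2_martingale_diff M F "e s'" for s'
    unfolding e_def by (rule next_state_indicator_L2_martingale_diff)
  have "L2_martingale_diff M F (\<lambda>t \<omega>. c t s' \<omega> * e s' t \<omega>)" for s'
    by (rule E.L2_martingale_diff_mult[OF c_measurable c_bounded])
  then have "L2_martingale_diff M F (\<lambda>t \<omega>. \<Sum>s'\<in>UNIV. c t s' \<omega> * e s' t \<omega>)"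
    by (intro E.L2_martingale_diff_sum) auto
  moreover have "(\<Sum>s'\<in>UNIV. c t s' \<omega> * e s' t \<omega>)
      = c t (S (Suc t) \<omega>) \<omega> - (\<Sum>s'\<in>UNIV. trans_prob Kr (S t \<omega>) (A t \<omega>) s' * c t s' \<omega>)" for t \<omega>
  proof -
    have "(\<Sum>s'\<in>UNIV. c t s' \<omega> * indicator {s'} (S (Suc t) \<omega>)) = c t (S (Suc t) \<omega>) \<omega>"
      by (simp add: indicator_def if_distrib[of "\<lambda>x. c t _ \<omega> * x"] cong: if_cong)
    then show ?thesis
      by (simp add: e_def right_diff_distrib sum_subtractf mult.commute)
  qed
  ultimately show ?thesis
    by simp
qed

lemma acdq_tables_measurable:
  assumes alpha_meas: "\<And>t s a. \<alpha> t s a \<in> borel_measurable (F t)"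
    and aK_meas: "\<And>t. aK t \<in> measurable (F (Suc t)) (count_space UNIV)"
  shows "(\<lambda>\<omega>. fst (acdq_tables \<gamma> QA0 QB0 S Rw \<alpha> aK t \<omega>) s a) \<in> borel_measurable (F t)
    \<and> (\<lambda>\<omega>. snd (acdq_tables \<gamma> QA0 QB0 S Rw \<alpha> aK t \<omega>) s a) \<in> borel_measurable (F t)"
proof (induction t arbitrary: s a)
  case (Suc t)
  define QA where "QA \<omega> = fst (acdq_tables \<gamma> QA0 QB0 S Rw \<alpha> aK t \<omega>)" for \<omega>
  define QB where "QB \<omega> = snd (acdq_tables \<gamma> QA0 QB0 S Rw \<alpha> aK t \<omega>)" for \<omega>
  have [measurable]: "(\<lambda>\<omega>. QA \<omega> s a) \<in> borel_measurable (F (Suc t))"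
    "(\<lambda>\<omega>. QB \<omega> s a) \<in> borel_measurable (F (Suc t))"
    "\<alpha> t s a \<in> borel_measurable (F (Suc t))" for s a
    using Suc[of s a] measurable_F_mono[of _ t borel "Suc t"] alpha_meas[of t s a]
    by (auto simp: QA_def QB_def)
  have [measurable]: "Rw t \<in> borel_measurable (F (Suc t))"
    by (rule R_meas)
  have [measurable]: "(\<lambda>\<omega>. QB \<omega> (S (Suc t) \<omega>) (aK t \<omega>)) \<in> borel_measurable (F (Suc t))"
  proof (rule measurable_compose_countable'[where I = UNIV and g = "S (Suc t)"])
    fix s
    show "(\<lambda>\<omega>. QB \<omega> s (aK t \<omega>)) \<in> borel_measurable (F (Suc t))"
      by (rule measurable_compose_countable'[where I = UNIV and g = "aK t"]) (use aK_meas in auto)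
  qed (use S_meas in auto)
  have [measurable]: "(\<lambda>\<omega>. Max (range (QA \<omega> (S (Suc t) \<omega>)))) \<in> borel_measurable (F (Suc t))"
  proof (rule measurable_compose_countable'[where I = UNIV and g = "S (Suc t)"])
    fix s
    show "(\<lambda>\<omega>. Max (range (QA \<omega> s))) \<in> borel_measurable (F (Suc t))"
      using borel_measurable_Max[of UNIV "\<lambda>a \<omega>. QA \<omega> s a" "F (Suc t)"] by simp
  qed (use S_meas in auto)
  show ?case
    by (simp add: Let_def QA_def[symmetric] QB_def[symmetric])
qed simp

context
  fixes \<alpha> :: "nat \<Rightarrow> 's \<Rightarrow> 'a \<Rightarrow> 'w \<Rightarrow> real"
  assumes alpha_meas: "\<And>t s a. \<alpha> t s a \<in> borel_measurable (F t)"
    and alpha_range: "AE \<omega> in M. \<forall>t s a. 0 \<le> \<alpha> t s a \<omega> \<and> \<alpha> t s a \<omega> \<le> 1"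
    and alpha_sum: "AE \<omega> in M. \<forall>s a. \<not> summable (\<lambda>t. \<alpha> t s a \<omega>)"
    and alpha_sq: "AE \<omega> in M. \<forall>s a. summable (\<lambda>t. (\<alpha> t s a \<omega>)\<^sup>2)"
begin

lemma AE_running_avg_tendsto_zero:
  assumes "L2_martingale_diff M F d"
    and "\<And>t \<eta>. \<eta> \<in> borel_measurable (F t) \<Longrightarrow> (\<And>\<omega>. 0 \<le> \<eta> \<omega>) \<Longrightarrow> (\<And>\<omega>. \<eta> \<omega> \<le> 1) \<Longrightarrow>
        (\<integral>\<omega>. \<eta> \<omega> * (d t \<omega>)\<^sup>2 \<partial>M) \<le> C * (\<integral>\<omega>. \<eta> \<omega> \<partial>M)"
  shows "AE \<omega> in M. \<forall>s a. running_avg (\<lambda>t. \<alpha> t s a \<omega>) (\<lambda>t. d t \<omega>) \<longlonglongrightarrow> 0"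
proof -
  interpret noise: L2_martingale_diff M F d
    by (rule assms(1))
  have "AE \<omega> in M. running_avg (\<lambda>t. \<alpha> t s a \<omega>) (\<lambda>t. d t \<omega>) \<longlonglongrightarrow> 0" for s a
  proof (rule noise.running_avg_tendsto_zero_AE[OF assms(2) alpha_meas])
    show "AE \<omega> in M. \<forall>t. 0 \<le> \<alpha> t s a \<omega> \<and> \<alpha> t s a \<omega> \<le> 1"
      using alpha_range by eventually_elim auto
    show "AE \<omega> in M. summable (\<lambda>t. (\<alpha> t s a \<omega>)\<^sup>2)"
      using alpha_sq by eventually_elim auto
    show "AE \<omega> in M. \<not> summable (\<lambda>t. \<alpha> t s a \<omega>)"
      using alpha_sum by eventually_elim auto
  qed auto
  then show ?thesis
    by (simp add: AE_all_countable)
qed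

lemma AE_reward_noise_avg_tendsto_zero:
  "AE \<omega> in M. \<forall>s a. running_avg (\<lambda>t. \<alpha> t s a \<omega>) (\<lambda>t. Rw t \<omega> - exp_reward Kr (S t \<omega>) (A t \<omega>)) \<longlonglongrightarrow> 0"
  using reward_noise_L2_martingale_diff reward_noise_variance_le by (rule AE_running_avg_tendsto_zero)

lemma AE_transition_noise_avg_tendsto_zero:
  fixes V :: "nat \<Rightarrow> 's \<Rightarrow> 'w \<Rightarrow> real" and \<gamma> :: real
  assumes V_measurable: "\<And>t s'. V t s' \<in> borel_measurable (F t)"
  shows "AE \<omega> in M. \<forall>(N::nat) s a. running_avg (\<lambda>t. \<alpha> t s a \<omega>)
    (\<lambda>t. \<gamma> * clip N (V t (S (Suc t) \<omega>) \<omega>)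
      - (\<Sum>s'\<in>UNIV. trans_prob Kr (S t \<omega>) (A t \<omega>) s' * (\<gamma> * clip N (V t s' \<omega>)))) \<longlonglongrightarrow> 0"
proof -
  have "AE \<omega> in M. \<forall>s a. running_avg (\<lambda>t. \<alpha> t s a \<omega>)
    (\<lambda>t. \<gamma> * clip N (V t (S (Suc t) \<omega>) \<omega>)
      - (\<Sum>s'\<in>UNIV. trans_prob Kr (S t \<omega>) (A t \<omega>) s' * (\<gamma> * clip N (V t s' \<omega>)))) \<longlonglongrightarrow> 0"
    for N :: nat
  proof (rule AE_running_avg_tendsto_zero)
    have c_measurable: "(\<lambda>\<omega>. \<gamma> * clip N (V t s' \<omega>)) \<in> borel_measurable (F t)" for t s'
      using V_measurable[of t s'] unfolding clip_def by measurable
    have c_bounded: "\<bar>\<gamma> * clip N (V t s' \<omega>)\<bar> \<le> \<bar>\<gamma>\<bar> * N" for t s' \<omega>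
      using abs_clip_le[of N "V t s' \<omega>"] by (simp add: abs_mult mult_left_mono)
    show "L2_martingale_diff M F (\<lambda>t \<omega>. \<gamma> * clip N (V t (S (Suc t) \<omega>) \<omega>)
        - (\<Sum>s'\<in>UNIV. trans_prob Kr (S t \<omega>) (A t \<omega>) s' * (\<gamma> * clip N (V t s' \<omega>))))"
      by (rule transition_noise_L2_martingale_diff[OF c_measurable c_bounded])
    then interpret noise: L2_martingale_diff M F "\<lambda>t \<omega>. \<gamma> * clip N (V t (S (Suc t) \<omega>) \<omega>)
        - (\<Sum>s'\<in>UNIV. trans_prob Kr (S t \<omega>) (A t \<omega>) s' * (\<gamma> * clip N (V t s' \<omega>)))" .
    show "(\<integral>\<omega>. \<eta> \<omega> * (\<gamma> * clip N (V t (S (Suc t) \<omega>) \<omega>)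
        - (\<Sum>s'\<in>UNIV. trans_prob Kr (S t \<omega>) (A t \<omega>) s' * (\<gamma> * clip N (V t s' \<omega>))))\<^sup>2 \<partial>M)
      \<le> (2 * (\<bar>\<gamma>\<bar> * N))\<^sup>2 * (\<integral>\<omega>. \<eta> \<omega> \<partial>M)"
      if "\<eta> \<in> borel_measurable (F t)" "\<And>\<omega>. 0 \<le> \<eta> \<omega>" "\<And>\<omega>. \<eta> \<omega> \<le> 1" for t \<eta>
      using abs_transition_noise_le[OF c_bounded] that by (rule noise.variance_le_of_bounded)
  qed
  then show ?thesis
    by (simp add: AE_all_countable)
qed

end

end

theorem theorem3:
  fixes M :: "'w measure"
    and F :: "nat \<Rightarrow> 'w measure"
    and Kr :: "'s::finite \<Rightarrow> 'a::finite \<Rightarrow> (real \<times> 's) measure"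
    and \<gamma> :: real and K :: nat
    and S :: "nat \<Rightarrow> 'w \<Rightarrow> 's" and A :: "nat \<Rightarrow> 'w \<Rightarrow> 'a" and Rw :: "nat \<Rightarrow> 'w \<Rightarrow> real"
    and \<alpha> :: "nat \<Rightarrow> 's \<Rightarrow> 'a \<Rightarrow> 'w \<Rightarrow> real"
    and aK :: "nat \<Rightarrow> 'w \<Rightarrow> 'a"
    and QA0 QB0 Qstar :: "'s \<Rightarrow> 'a \<Rightarrow> real"
  assumes prob: "prob_space M"
    and filt: "filtration (space M) F" and sub: "\<And>t. subalgebra M (F t)"
    and Kr_prob: "\<And>s a. prob_space (Kr s a)"
    and Kr_sets: "\<And>s a. sets (Kr s a) = sets (borel \<Otimes>\<^sub>M count_space UNIV)"
    and Kr_var: "\<And>s a. integrable (Kr s a) (\<lambda>x. (fst x)\<^sup>2)"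
    and gamma: "0 \<le> \<gamma>" "\<gamma> < 1"
    and K: "1 \<le> K" "K \<le> CARD('a)"
    and S_meas: "\<And>t. S t \<in> measurable (F t) (count_space UNIV)"
    and A_meas: "\<And>t. A t \<in> measurable (F t) (count_space UNIV)"
    and R_meas: "\<And>t. Rw t \<in> borel_measurable (F (Suc t))"
    and alpha_meas: "\<And>t s a. \<alpha> t s a \<in> borel_measurable (F t)"
    and sample_law: "\<And>t E B. E \<in> sets (F t) \<Longrightarrow> B \<in> sets (borel \<Otimes>\<^sub>M count_space UNIV) \<Longrightarrow>
        measure M (E \<inter> {\<omega> \<in> space M. (Rw t \<omega>, S (Suc t) \<omega>) \<in> B})
          = (\<integral>\<omega>. indicator E \<omega> * measure (Kr (S t \<omega>) (A t \<omega>)) B \<partial>M)"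
    and aK_meas: "\<And>t. aK t \<in> measurable (F (Suc t)) (count_space UNIV)"
    and aK_sel: "\<And>t \<omega>. \<omega> \<in> space M \<Longrightarrow>
        (let QA = fst (acdq_tables \<gamma> QA0 QB0 S Rw \<alpha> aK t \<omega>);
             QB = snd (acdq_tables \<gamma> QA0 QB0 S Rw \<alpha> aK t \<omega>);
             s' = S (Suc t) \<omega>
         in aK t \<omega> \<in> topK K (QB s') \<and> (\<forall>b\<in>topK K (QB s'). QA s' b \<le> QA s' (aK t \<omega>)))"
    and inf_visits: "\<And>s a. AE \<omega> in M. infinite {t. S t \<omega> = s \<and> A t \<omega> = a}"
    and alpha_range: "AE \<omega> in M. \<forall>t s a. 0 \<le> \<alpha> t s a \<omega> \<and> \<alpha> t s a \<omega> \<le> 1"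
    and alpha_zero: "AE \<omega> in M. \<forall>t s a. (s, a) \<noteq> (S t \<omega>, A t \<omega>) \<longrightarrow> \<alpha> t s a \<omega> = 0"
    and alpha_sum: "AE \<omega> in M. \<forall>s a. \<not> summable (\<lambda>t. \<alpha> t s a \<omega>)"
    and alpha_sq: "AE \<omega> in M. \<forall>s a. summable (\<lambda>t. (\<alpha> t s a \<omega>)\<^sup>2)"
    and Qstar: "is_optimal_Q Kr \<gamma> Qstar"
  shows "AE \<omega> in M. \<forall>s a.
           (\<lambda>t. fst (acdq_tables \<gamma> QA0 QB0 S Rw \<alpha> aK t \<omega>) s a) \<longlonglongrightarrow> Qstar s a \<and>
           (\<lambda>t. snd (acdq_tables \<gamma> QA0 QB0 S Rw \<alpha> aK t \<omega>) s a) \<longlonglongrightarrow> Qstar s a"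
proof -
  interpret sampled_mdp M F Kr S A Rw
    using prob filt sampled_mdp_axioms.intro[of M F Kr S A Rw]
      sub Kr_prob Kr_sets Kr_var S_meas A_meas R_meas sample_law
    by (simp add: sampled_mdp_def)
  have Bellman: "Qstar s a
      = exp_reward Kr s a + \<gamma> * (\<Sum>s'\<in>UNIV. trans_prob Kr s a s' * Max (range (Qstar s')))" for s a
    using Qstar unfolding is_optimal_Q_def by blast
  define V where "V t s' \<omega> = Max (range (fst (acdq_tables \<gamma> QA0 QB0 S Rw \<alpha> aK t \<omega>) s'))" for t s' \<omega>
  have "V t s' \<in> borel_measurable (F t)" for t s'
    unfolding V_def using acdq_tables_measurable[OF alpha_meas aK_meas] by (intro borel_measurable_Max) auto
  then have "AE \<omega> in M. \<forall>(N::nat) s a. running_avg (\<lambda>t. \<alpha> t s a \<omega>)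
    (\<lambda>t. \<gamma> * clip N (V t (S (Suc t) \<omega>) \<omega>)
      - (\<Sum>s'\<in>UNIV. trans_prob Kr (S t \<omega>) (A t \<omega>) s' * (\<gamma> * clip N (V t s' \<omega>)))) \<longlonglongrightarrow> 0"
    by (rule AE_transition_noise_avg_tendsto_zero[OF alpha_meas alpha_range alpha_sum alpha_sq])
  with AE_reward_noise_avg_tendsto_zero[OF alpha_meas alpha_range alpha_sum alpha_sq]
    alpha_range alpha_zero alpha_sum AE_space
  show ?thesis
  proof eventually_elim
    case (elim \<omega>)
    interpret path: acdq_path \<gamma> K "\<lambda>t s a. \<alpha> t s a \<omega>" "\<lambda>t. S t \<omega>" "\<lambda>t. A t \<omega>" "\<lambda>t. Rw t \<omega>" "\<lambda>t. aK t \<omega>"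
      "\<lambda>t. fst (acdq_tables \<gamma> QA0 QB0 S Rw \<alpha> aK t \<omega>)" "\<lambda>t. snd (acdq_tables \<gamma> QA0 QB0 S Rw \<alpha> aK t \<omega>)"
      using gamma K elim aK_sel by (intro acdq_tables_path) auto
    show ?case
      using path.tables_tendsto_fixed_point[OF trans_prob_nonneg sum_trans_prob Bellman
          elim(1)[rule_format] elim(6)[unfolded V_def, rule_format]]
      by blast
  qed
qed

end
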